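(* Let $(\mathcal{T},[1],\Delta)$ be a triangulated category and $\mathcal{N}$ a triangulated subcategory of $\mathcal{T}$. Let $\mathcal{U},\mathcal{V}$ be additive subcategories of $\mathcal{T}$ such that $(\mathcal{U},\mathcal{U}^{\perp})$ and $({}^{\perp}\mathcal{V},\mathcal{V})$ are torsion pairs in $\mathcal{T}$. Assume that $\mathcal{X}=\mathcal{U}\cap\mathcal{V}\cap\mathcal{N}$ is closed under direct summands, $\mathcal{U}^{\perp}[-1]\subseteq\mathcal{V}\cap\mathcal{N}$ and ${}^{\perp}\mathcal{V}[1]\subseteq\mathcal{U}\cap\mathcal{N}$. Then: (i) $(\mathcal{U},\mathcal{X},\mathcal{V})$ is an $\mathcal{N}$-localization triple; (ii) if ${}^{\perp}\mathcal{V}[1]=\mathcal{U}\cap\mathcal{N}$, then $(\mathcal{U},\mathcal{X},\mathcal{V})$ satisfies the Verdier condition; (iii) if $\mathcal{U}^{\perp}[-1]=\mathcal{V}\cap\mathcal{N}$, then $(\mathcal{U},\mathcal{X},\mathcal{V})$ satisfies the Verdier condition.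
   Context: $\Delta$ denotes the class of distinguished triangles of $\mathcal{T}$; all subcategories are full, additive and closed under isomorphisms. $\mathcal{U}^{\perp}=\{T\in\mathcal{T}:\mathrm{Hom}_{\mathcal{T}}(\mathcal{U},T)=0\}$, ${}^{\perp}\mathcal{V}=\{T:\mathrm{Hom}_{\mathcal{T}}(T,\mathcal{V})=0\}$. A pair $(\mathcal{C},\mathcal{D})$ of additive subcategories is a torsion pair if $\mathrm{Hom}_{\mathcal{T}}(\mathcal{C},\mathcal{D})=0$ and every $T\in\mathcal{T}$ admits a triangle $C\to T\to D\to C[1]$ in $\Delta$ with $C\in\mathcal{C}$, $D\in\mathcal{D}$. For additive subcategories $\mathcal{X}\subseteq\mathcal{C}$, the factor category $\mathcal{C}/[\mathcal{X}]$ has the objects of $\mathcal{C}$ and morphisms $\mathrm{Hom}_{\mathcal{T}}(A,B)$ modulo those factoring through an object of $\mathcal{X}$; $\underline{f}$ is the class of $f$. For a subcategory $\mathcal{Y}$, a morphism $f\colon A\to B$ is $\mathcal{Y}$-monic if $\mathrm{Hom}_{\mathcal{T}}(B,Y)\to\mathrm{Hom}_{\mathcal{T}}(A,Y)$ is surjective for all $Y\in\mathcal{Y}$, $\mathcal{Y}$-epic dually; a $\mathcal{Y}$-preenvelope of $A$ is a $\mathcal{Y}$-monic $A\to Y$ with $Y\in\mathcal{Y}$, a $\mathcal{Y}$-precover is a $\mathcal{Y}$-epic $Y\to A$ with $Y\in\mathcal{Y}$. For additive subcategories $\mathcal{U},\mathcal{V}\supseteq\mathcal{X}$ of an additive subcategory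 $\mathcal{A}$, put $\mathcal{U}^{\perp_{\mathcal{A}/[\mathcal{X}]}}=\{W\in\mathcal{A}:\mathrm{Hom}_{\mathcal{A}/[\mathcal{X}]}(\mathcal{U},W)=0\}$ and ${}^{\perp_{\mathcal{A}/[\mathcal{X}]}}\mathcal{V}=\{W\in\mathcal{A}:\mathrm{Hom}_{\mathcal{A}/[\mathcal{X}]}(W,\mathcal{V})=0\}$. A triple $(\mathcal{U},\mathcal{X},\mathcal{V})$ with $\mathcal{X}\subseteq\mathcal{U}\cap\mathcal{V}$ and $\mathcal{U},\mathcal{V}\subseteq\mathcal{A}$ is a localization triple of $\mathcal{A}$ if: (a) each $A\in\mathcal{A}$ admits a triangle $A[-1]\to W_A\to Q(A)\xrightarrow{r_A}A$ in $\Delta$ with $r_A$ a $\mathcal{U}$-precover and $W_A\in\mathcal{U}^{\perp_{\mathcal{A}/[\mathcal{X}]}}$; (b) each $A\in\mathcal{A}$ admits a triangle $A\xrightarrow{j^A}R(A)\to W^A\to A[1]$ in $\Delta$ with $j^A$ a $\mathcal{V}$-preenvelope and $W^A\in{}^{\perp_{\mathcal{A}/[\mathcal{X}]}}\mathcal{V}$; (c) if $A\in\mathcal{V}$ then $Q(A)\in\mathcal{U}\cap\mathcal{V}$ and $W_A\in(\mathcal{U}\cap\mathcal{V})^{\perp_{\mathcal{V}/[\mathcal{X}]}}$, and if $A\in\mathcal{U}$ then $R(A)\in\mathcal{U}\cap\mathcal{V}$ and $W^A\in{}^{\perp_{\mathcal{U}/[\mathcal{X}]}}(\mathcal{U}\cap\mathcal{V})$.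 A localization triple $(\mathcal{U},\mathcal{X},\mathcal{V})$ of $\mathcal{T}$ is an $\mathcal{N}$-localization triple if $\mathcal{X}=\mathcal{U}\cap\mathcal{V}\cap\mathcal{N}$ and $\mathcal{U}^{\perp_{\mathcal{T}/[\mathcal{X}]}}\subseteq\mathcal{N}$, ${}^{\perp_{\mathcal{T}/[\mathcal{X}]}}\mathcal{V}\subseteq\mathcal{N}$. It satisfies the Verdier condition if for every triangle $A\xrightarrow{s}B\to N\to A[1]$ in $\Delta$ with $A,B\in\mathcal{U}\cap\mathcal{V}$ and $N\in\mathcal{N}$, $\underline{s}$ is an isomorphism in $(\mathcal{U}\cap\mathcal{V})/[\mathcal{X}]$. *)

theory Defs
  imports Main
begin

text \<open>Morphisms live in a type 'm, objects in a type 'o;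
Hom A B is the set of morphisms from A to B, cmp g f is the composite
g after f, and add/neg/zer give the abelian group structure on each Hom set.\<close>

record ('o, 'm) tcat =
  Ob  :: "'o set"
  Hom :: "'o \<Rightarrow> 'o \<Rightarrow> 'm set"
  cmp :: "'m \<Rightarrow> 'm \<Rightarrow> 'm"
  idm :: "'o \<Rightarrow> 'm"
  add :: "'m \<Rightarrow> 'm \<Rightarrow> 'm"
  neg :: "'m \<Rightarrow> 'm"
  zer :: "'o \<Rightarrow> 'o \<Rightarrow> 'm"
  shO :: "'o \<Rightarrow> 'o"
  shM :: "'m \<Rightarrow> 'm"
  tri :: "('o \<times> 'o \<times> 'o \<times> 'm \<times> 'm \<times> 'm) set"

definition is_iso :: "('o,'m) tcat \<Rightarrow> 'o \<Rightarrow> 'o \<Rightarrow> 'm \<Rightarrow> bool" where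
  "is_iso T A B f \<longleftrightarrow> f \<in> Hom T A B \<and>
     (\<exists>g \<in> Hom T B A. cmp T g f = idm T A \<and> cmp T f g = idm T B)"

definition is_zero_obj :: "('o,'m) tcat \<Rightarrow> 'o \<Rightarrow> bool" where
  "is_zero_obj T Z \<longleftrightarrow> Z \<in> Ob T \<and>
     (\<forall>A \<in> Ob T. Hom T Z A = {zer T Z A} \<and> Hom T A Z = {zer T A Z})"

definition is_biprod :: "('o,'m) tcat \<Rightarrow> 'o \<Rightarrow> 'o \<Rightarrow> 'o \<Rightarrow> 'm \<Rightarrow> 'm \<Rightarrow> 'm \<Rightarrow> 'm \<Rightarrow> bool" where
  "is_biprod T A B P i1 i2 p1 p2 \<longleftrightarrow> A \<in> Ob T \<and> B \<in> Ob T \<and> P \<in> Ob T \<and>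
     i1 \<in> Hom T A P \<and> i2 \<in> Hom T B P \<and> p1 \<in> Hom T P A \<and> p2 \<in> Hom T P B \<and>
     cmp T p1 i1 = idm T A \<and> cmp T p2 i2 = idm T B \<and>
     cmp T p1 i2 = zer T B A \<and> cmp T p2 i1 = zer T A B \<and>
     add T (cmp T i1 p1) (cmp T i2 p2) = idm T P"

definition additive_cat :: "('o,'m) tcat \<Rightarrow> bool" where
  "additive_cat T \<longleftrightarrow>
     (\<forall>A\<in>Ob T. \<forall>B\<in>Ob T. \<forall>C\<in>Ob T. \<forall>D\<in>Ob T.
        Hom T A B \<inter> Hom T C D \<noteq> {} \<longrightarrow> A = C \<and> B = D) \<and>
     (\<forall>A\<in>Ob T. idm T A \<in> Hom T A A) \<and>
     (\<forall>A\<in>Ob T. \<forall>B\<in>Ob T. \<forall>C\<in>Ob T. \<forall>f\<in>Hom T A B. \<forall>g\<in>Hom T B C.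
        cmp T g f \<in> Hom T A C) \<and>
     (\<forall>A\<in>Ob T. \<forall>B\<in>Ob T. \<forall>f\<in>Hom T A B.
        cmp T (idm T B) f = f \<and> cmp T f (idm T A) = f) \<and>
     (\<forall>A\<in>Ob T. \<forall>B\<in>Ob T. \<forall>C\<in>Ob T. \<forall>D\<in>Ob T.
        \<forall>f\<in>Hom T A B. \<forall>g\<in>Hom T B C. \<forall>h\<in>Hom T C D.
        cmp T h (cmp T g f) = cmp T (cmp T h g) f) \<and>
     \<comment> \<open>each Hom set is an abelian group\<close>
     (\<forall>A\<in>Ob T. \<forall>B\<in>Ob T.
        zer T A B \<in> Hom T A B \<and>
        (\<forall>f\<in>Hom T A B. \<forall>g\<in>Hom T A B. add T f g \<in> Hom T A B) \<and>
        (\<forall>f\<in>Hom T A B. neg T f \<in> Hom T A B) \<and>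
        (\<forall>f\<in>Hom T A B. \<forall>g\<in>Hom T A B. \<forall>h\<in>Hom T A B.
            add T (add T f g) h = add T f (add T g h)) \<and>
        (\<forall>f\<in>Hom T A B. \<forall>g\<in>Hom T A B. add T f g = add T g f) \<and>
        (\<forall>f\<in>Hom T A B. add T f (zer T A B) = f) \<and>
        (\<forall>f\<in>Hom T A B. add T f (neg T f) = zer T A B)) \<and>
     \<comment> \<open>composition is bilinear\<close>
     (\<forall>A\<in>Ob T. \<forall>B\<in>Ob T. \<forall>C\<in>Ob T.
        \<forall>f\<in>Hom T A B. \<forall>f'\<in>Hom T A B. \<forall>g\<in>Hom T B C. \<forall>g'\<in>Hom T B C.
        cmp T g (add T f f') = add T (cmp T g f) (cmp T g f') \<and>
        cmp T (add T g g') f = add T (cmp T g f) (cmp T g' f)) \<and>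
     \<comment> \<open>zero object and binary biproducts\<close>
     (\<exists>Z. is_zero_obj T Z) \<and>
     (\<forall>A\<in>Ob T. \<forall>B\<in>Ob T. \<exists>P i1 i2 p1 p2. is_biprod T A B P i1 i2 p1 p2)"

definition shift_autoequiv :: "('o,'m) tcat \<Rightarrow> bool" where
  "shift_autoequiv T \<longleftrightarrow>
     (\<forall>A\<in>Ob T. shO T A \<in> Ob T) \<and>
     (\<forall>A\<in>Ob T. \<forall>B\<in>Ob T. bij_betw (shM T) (Hom T A B) (Hom T (shO T A) (shO T B))) \<and>
     (\<forall>A\<in>Ob T. shM T (idm T A) = idm T (shO T A)) \<and>
     (\<forall>A\<in>Ob T. \<forall>B\<in>Ob T. \<forall>C\<in>Ob T. \<forall>f\<in>Hom T A B. \<forall>g\<in>Hom T B C.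
        shM T (cmp T g f) = cmp T (shM T g) (shM T f)) \<and>
     (\<forall>A\<in>Ob T. \<forall>B\<in>Ob T. \<forall>f\<in>Hom T A B. \<forall>g\<in>Hom T A B.
        shM T (add T f g) = add T (shM T f) (shM T g)) \<and>
     (\<forall>B\<in>Ob T. \<exists>A\<in>Ob T. \<exists>f. is_iso T (shO T A) B f)"

definition typed_triangle :: "('o,'m) tcat \<Rightarrow> 'o \<Rightarrow> 'o \<Rightarrow> 'o \<Rightarrow> 'm \<Rightarrow> 'm \<Rightarrow> 'm \<Rightarrow> bool" where
  "typed_triangle T A B C f g h \<longleftrightarrow> A \<in> Ob T \<and> B \<in> Ob T \<and> C \<in> Ob T \<and>
     f \<in> Hom T A B \<and> g \<in> Hom T B C \<and> h \<in> Hom T C (shO T A)"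

definition triangulated :: "('o,'m) tcat \<Rightarrow> bool" where
  "triangulated T \<longleftrightarrow> additive_cat T \<and> shift_autoequiv T \<and>
     \<comment> \<open>distinguished triangles are triangles\<close>
     (\<forall>(A,B,C,f,g,h)\<in>tri T. typed_triangle T A B C f g h) \<and>
     \<comment> \<open>TR1: closure under isomorphism of triangles\<close>
     (\<forall>A B C f g h A' B' C' f' g' h' a b c.
        (A,B,C,f,g,h) \<in> tri T \<and> typed_triangle T A' B' C' f' g' h' \<and>
        is_iso T A A' a \<and> is_iso T B B' b \<and> is_iso T C C' c \<and>
        cmp T b f = cmp T f' a \<and> cmp T c g = cmp T g' b \<and>
        cmp T (shM T a) h = cmp T h' c
        \<longrightarrow> (A',B',C',f',g',h') \<in> tri T) \<and>
     \<comment> \<open>TR1: A --id--> A --> 0 --> A[1] is distinguished\<close>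
     (\<forall>A\<in>Ob T. \<forall>Z. is_zero_obj T Z \<longrightarrow>
        (A, A, Z, idm T A, zer T A Z, zer T Z (shO T A)) \<in> tri T) \<and>
     \<comment> \<open>TR1: every morphism extends to a distinguished triangle\<close>
     (\<forall>A\<in>Ob T. \<forall>B\<in>Ob T. \<forall>f\<in>Hom T A B. \<exists>C g h. (A,B,C,f,g,h) \<in> tri T) \<and>
     \<comment> \<open>TR2: rotation\<close>
     (\<forall>A B C f g h. typed_triangle T A B C f g h \<longrightarrow>
        ((A,B,C,f,g,h) \<in> tri T \<longleftrightarrow> (B, C, shO T A, g, h, neg T (shM T f)) \<in> tri T)) \<and>
     \<comment> \<open>TR3: completion of morphisms of triangles\<close>
     (\<forall>A B C f g h A' B' C' f' g' h' a b.
        (A,B,C,f,g,h) \<in> tri T \<and> (A',B',C',f',g',h') \<in> tri T \<and>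
        a \<in> Hom T A A' \<and> b \<in> Hom T B B' \<and> cmp T b f = cmp T f' a
        \<longrightarrow> (\<exists>c\<in>Hom T C C'. cmp T c g = cmp T g' b \<and> cmp T (shM T a) h = cmp T h' c)) \<and>
     \<comment> \<open>TR4: octahedral axiom\<close>
     (\<forall>A B C f g C' u u' A' v v' B' w w'.
        (A,B,C',f,u,u') \<in> tri T \<and> (B,C,A',g,v,v') \<in> tri T \<and>
        (A,C,B',cmp T g f,w,w') \<in> tri T
        \<longrightarrow> (\<exists>a b. (C',B',A',a,b, cmp T (shM T u) v') \<in> tri T \<and>
               cmp T a u = cmp T w g \<and> cmp T w' a = u' \<and>
               cmp T b w = v \<and> cmp T v' b = cmp T (shM T f) w'))"

text \<open>Full additive subcategories closed under isomorphisms, given by object sets.\<close>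
definition iso_closed :: "('o,'m) tcat \<Rightarrow> 'o set \<Rightarrow> bool" where
  "iso_closed T S \<longleftrightarrow> (\<forall>A\<in>S. \<forall>B f. is_iso T A B f \<longrightarrow> B \<in> S)"

definition additive_subcat :: "('o,'m) tcat \<Rightarrow> 'o set \<Rightarrow> bool" where
  "additive_subcat T S \<longleftrightarrow> S \<subseteq> Ob T \<and> iso_closed T S \<and>
     (\<exists>Z\<in>S. is_zero_obj T Z) \<and>
     (\<forall>A\<in>S. \<forall>B\<in>S. \<forall>P i1 i2 p1 p2. is_biprod T A B P i1 i2 p1 p2 \<longrightarrow> P \<in> S)"

definition triangulated_subcat :: "('o,'m) tcat \<Rightarrow> 'o set \<Rightarrow> bool" where
  "triangulated_subcat T S \<longleftrightarrow> additive_subcat T S \<and>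
     (\<forall>A\<in>Ob T. A \<in> S \<longleftrightarrow> shO T A \<in> S) \<and>
     (\<forall>A B C f g h. (A,B,C,f,g,h) \<in> tri T \<and> A \<in> S \<and> B \<in> S \<longrightarrow> C \<in> S)"

definition closed_summands :: "('o,'m) tcat \<Rightarrow> 'o set \<Rightarrow> bool" where
  "closed_summands T S \<longleftrightarrow>
     (\<forall>A B P i1 i2 p1 p2. is_biprod T A B P i1 i2 p1 p2 \<and> P \<in> S \<longrightarrow> A \<in> S)"

definition rperp :: "('o,'m) tcat \<Rightarrow> 'o set \<Rightarrow> 'o set" where
  "rperp T U = {W \<in> Ob T. \<forall>A\<in>U. Hom T A W = {zer T A W}}"

definition lperp :: "('o,'m) tcat \<Rightarrow> 'o set \<Rightarrow> 'o set" where
  "lperp T V = {W \<in> Ob T. \<forall>B\<in>V. Hom T W B = {zer T W B}}"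

definition torsion_pair :: "('o,'m) tcat \<Rightarrow> 'o set \<Rightarrow> 'o set \<Rightarrow> bool" where
  "torsion_pair T C D \<longleftrightarrow> additive_subcat T C \<and> additive_subcat T D \<and>
     (\<forall>X\<in>C. \<forall>Y\<in>D. Hom T X Y = {zer T X Y}) \<and>
     (\<forall>X\<in>Ob T. \<exists>P Q c d e. P \<in> C \<and> Q \<in> D \<and> (P, X, Q, c, d, e) \<in> tri T)"

text \<open>S[1] and S[-1] as (isomorphism-closed) object classes.\<close>
definition shift_up :: "('o,'m) tcat \<Rightarrow> 'o set \<Rightarrow> 'o set" where
  "shift_up T S = {Y \<in> Ob T. \<exists>X\<in>S. \<exists>f. is_iso T (shO T X) Y f}"

definition shift_down :: "('o,'m) tcat \<Rightarrow> 'o set \<Rightarrow> 'o set" where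
  "shift_down T S = {Y \<in> Ob T. \<exists>X\<in>S. \<exists>f. is_iso T (shO T Y) X f}"

text \<open>Factor categories: f : A -> B is zero in C/[K] iff it factors through K.\<close>
definition factors_through :: "('o,'m) tcat \<Rightarrow> 'o set \<Rightarrow> 'o \<Rightarrow> 'o \<Rightarrow> 'm \<Rightarrow> bool" where
  "factors_through T K A B f \<longleftrightarrow>
     (\<exists>X\<in>K. \<exists>a\<in>Hom T A X. \<exists>b\<in>Hom T X B. f = cmp T b a)"

definition rperpQ :: "('o,'m) tcat \<Rightarrow> 'o set \<Rightarrow> 'o set \<Rightarrow> 'o set \<Rightarrow> 'o set" where
  "rperpQ T K U Amb = {W \<in> Amb. \<forall>Y\<in>U. \<forall>f\<in>Hom T Y W. factors_through T K Y W f}"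

definition lperpQ :: "('o,'m) tcat \<Rightarrow> 'o set \<Rightarrow> 'o set \<Rightarrow> 'o set \<Rightarrow> 'o set" where
  "lperpQ T K V Amb = {W \<in> Amb. \<forall>Y\<in>V. \<forall>f\<in>Hom T W Y. factors_through T K W Y f}"

definition is_precover :: "('o,'m) tcat \<Rightarrow> 'o set \<Rightarrow> 'o \<Rightarrow> 'o \<Rightarrow> 'm \<Rightarrow> bool" where
  "is_precover T Y Q A r \<longleftrightarrow> Q \<in> Y \<and> r \<in> Hom T Q A \<and>
     (\<forall>Z\<in>Y. \<forall>g\<in>Hom T Z A. \<exists>h\<in>Hom T Z Q. g = cmp T r h)"

definition is_preenvelope :: "('o,'m) tcat \<Rightarrow> 'o set \<Rightarrow> 'o \<Rightarrow> 'o \<Rightarrow> 'm \<Rightarrow> bool" where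
  "is_preenvelope T Y A R j \<longleftrightarrow> R \<in> Y \<and> j \<in> Hom T A R \<and>
     (\<forall>Z\<in>Y. \<forall>g\<in>Hom T A Z. \<exists>h\<in>Hom T R Z. g = cmp T h j)"

text \<open>Localization triple of the subcategory Amb. The triangle
  A[-1] -> W_A -> Q(A) -> A of (a) is written in its rotated form
  W_A -> Q(A) -> A -> W_A[1] (equivalent by TR2).\<close>
definition localization_triple ::
  "('o,'m) tcat \<Rightarrow> 'o set \<Rightarrow> 'o set \<Rightarrow> 'o set \<Rightarrow> 'o set \<Rightarrow> bool" where
  "localization_triple T Amb U X V \<longleftrightarrow>
     X \<subseteq> U \<inter> V \<and> U \<subseteq> Amb \<and> V \<subseteq> Amb \<and>
     (\<exists>Q W r s t R W' j p q.
       (\<forall>A\<in>Amb.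
          \<comment> \<open>(a)\<close>
          (W A, Q A, A, s A, r A, t A) \<in> tri T \<and>
          is_precover T U (Q A) A (r A) \<and> W A \<in> rperpQ T X U Amb \<and>
          \<comment> \<open>(b)\<close>
          (A, R A, W' A, j A, p A, q A) \<in> tri T \<and>
          is_preenvelope T V A (R A) (j A) \<and> W' A \<in> lperpQ T X V Amb \<and>
          \<comment> \<open>(c)\<close>
          (A \<in> V \<longrightarrow> Q A \<in> U \<inter> V \<and> W A \<in> rperpQ T X (U \<inter> V) V) \<and>
          (A \<in> U \<longrightarrow> R A \<in> U \<inter> V \<and> W' A \<in> lperpQ T X (U \<inter> V) U)))"

definition N_localization_triple ::
  "('o,'m) tcat \<Rightarrow> 'o set \<Rightarrow> 'o set \<Rightarrow> 'o set \<Rightarrow> 'o set \<Rightarrow> bool" where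
  "N_localization_triple T N U X V \<longleftrightarrow>
     localization_triple T (Ob T) U X V \<and> X = U \<inter> V \<inter> N \<and>
     rperpQ T X U (Ob T) \<subseteq> N \<and> lperpQ T X V (Ob T) \<subseteq> N"

definition factor_iso :: "('o,'m) tcat \<Rightarrow> 'o set \<Rightarrow> 'o \<Rightarrow> 'o \<Rightarrow> 'm \<Rightarrow> bool" where
  "factor_iso T K A B s \<longleftrightarrow> s \<in> Hom T A B \<and>
     (\<exists>u\<in>Hom T B A.
        factors_through T K A A (add T (cmp T u s) (neg T (idm T A))) \<and>
        factors_through T K B B (add T (cmp T s u) (neg T (idm T B))))"

definition verdier_condition ::
  "('o,'m) tcat \<Rightarrow> 'o set \<Rightarrow> 'o set \<Rightarrow> 'o set \<Rightarrow> 'o set \<Rightarrow> bool" where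
  "verdier_condition T N U X V \<longleftrightarrow>
     (\<forall>A B M s g h. (A,B,M,s,g,h) \<in> tri T \<and> A \<in> U \<inter> V \<and> B \<in> U \<inter> V \<and> M \<in> N
        \<longrightarrow> factor_iso T X A B s)"

end

theory Submission
  imports Defs
begin

text \<open>Everything is driven by the approximation triangles U_A \<rightarrow> A \<rightarrow> R_A \<rightarrow> U_A[1]
  with R_A \<in> rperp U and L_A \<rightarrow> A \<rightarrow> V_A \<rightarrow> L_A[1] with L_A \<in> lperp V. The hypotheses put
  R_A[-1] into V \<inter> N and L_A[1] into U \<inter> N, so every map from U to V \<inter> N and every map
  from U \<inter> N to V factors through X. Whenever a connecting map of such a triangle
  vanishes the triangle splits, and closure of U, V, N under sums and of X under summands
  controls its terms. This gives the precovers and preenvelopes of the localization triple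
  with cocones in V \<inter> N and cones in U \<inter> N, and it shows that objects orthogonal to U
  (or V) modulo X lie in N.
  For the Verdier condition let A \<rightarrow> B \<rightarrow> M \<rightarrow> A[1] have A, B \<in> U \<inter> V and M \<in> N. The
  extra hypothesis makes the connecting map kill the U-approximation of M (dually, the
  V-approximation of M[-1] factors through M[-1] \<rightarrow> A), which yields u : B \<rightarrow> A with
  s u - 1 factoring through X. Then s (u s - 1) = (s u - 1) s factors through X, and s is
  a monomorphism modulo X on maps out of U, so u s - 1 factors through X as well.\<close>

lemma bchoice5:
  assumes "\<forall>x\<in>S. \<exists>a b c d e. P x a b c d e"
  shows "\<exists>fa fb fc fd fe. \<forall>x\<in>S. P x (fa x) (fb x) (fc x) (fd x) (fe x)"
proof -
  have "\<forall>x\<in>S. \<exists>z. P x (fst z) (fst (snd z)) (fst (snd (snd z))) (fst (snd (snd (snd z))))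
      (snd (snd (snd (snd z))))"
    using assms by simp
  then obtain F where "\<forall>x\<in>S. P x (fst (F x)) (fst (snd (F x))) (fst (snd (snd (F x))))
      (fst (snd (snd (snd (F x))))) (snd (snd (snd (snd (F x)))))"
    using bchoice[of S "\<lambda>x z. P x (fst z) (fst (snd z)) (fst (snd (snd z)))
      (fst (snd (snd (snd z)))) (snd (snd (snd (snd z))))"] by blast
  thus ?thesis
    by (intro exI[of _ "fst \<circ> F"] exI[of _ "fst \<circ> snd \<circ> F"] exI[of _ "fst \<circ> snd \<circ> snd \<circ> F"]
        exI[of _ "fst \<circ> snd \<circ> snd \<circ> snd \<circ> F"] exI[of _ "snd \<circ> snd \<circ> snd \<circ> snd \<circ> F"]) simp
qed

section \<open>Triangulated categories\<close>

locale triangulated_category =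
  fixes T :: "('o,'m) tcat"
  assumes triangulated: "triangulated T"
begin

abbreviation "sO \<equiv> shO T"
abbreviation "sM \<equiv> shM T"
abbreviation "cm \<equiv> cmp T"
abbreviation "ng \<equiv> neg T"
abbreviation "zr \<equiv> zer T"
abbreviation "ad \<equiv> add T"
abbreviation "idt \<equiv> idm T"
abbreviation "Tr \<equiv> tri T"

text \<open>The axioms only constrain Hom T A B for objects A and B, so we work with
  hom-sets that carry this information.\<close>
definition H :: "'o \<Rightarrow> 'o \<Rightarrow> 'm set" where
  "H A B = {f. A \<in> Ob T \<and> B \<in> Ob T \<and> f \<in> Hom T A B}"

lemma H_iff: "f \<in> H A B \<longleftrightarrow> A \<in> Ob T \<and> B \<in> Ob T \<and> f \<in> Hom T A B"
  by (simp add: H_def)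

lemma homD: assumes "f \<in> H A B" shows "A \<in> Ob T" "B \<in> Ob T" "f \<in> Hom T A B"
  using assms by (auto simp: H_def)

lemma additive: "additive_cat T"
  using triangulated unfolding triangulated_def by blast

lemma hom_abelian_group: "\<forall>A\<in>Ob T. \<forall>B\<in>Ob T.
        zr A B \<in> Hom T A B \<and>
        (\<forall>f\<in>Hom T A B. \<forall>g\<in>Hom T A B. ad f g \<in> Hom T A B) \<and>
        (\<forall>f\<in>Hom T A B. ng f \<in> Hom T A B) \<and>
        (\<forall>f\<in>Hom T A B. \<forall>g\<in>Hom T A B. \<forall>h\<in>Hom T A B. ad (ad f g) h = ad f (ad g h)) \<and>
        (\<forall>f\<in>Hom T A B. \<forall>g\<in>Hom T A B. ad f g = ad g f) \<and>
        (\<forall>f\<in>Hom T A B. ad f (zr A B) = f) \<and>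
        (\<forall>f\<in>Hom T A B. ad f (ng f) = zr A B)"
  using additive unfolding additive_cat_def by (elim conjE) assumption

lemma comp_bilinear: "\<forall>A\<in>Ob T. \<forall>B\<in>Ob T. \<forall>C\<in>Ob T.
        \<forall>f\<in>Hom T A B. \<forall>f'\<in>Hom T A B. \<forall>g\<in>Hom T B C. \<forall>g'\<in>Hom T B C.
        cm g (ad f f') = ad (cm g f) (cm g f') \<and> cm (ad g g') f = ad (cm g f) (cm g' f)"
  using additive unfolding additive_cat_def by (elim conjE) assumption

lemma id_hom: "A \<in> Ob T \<Longrightarrow> idt A \<in> H A A"
  using additive unfolding additive_cat_def H_def by (elim conjE) blast

lemma comp_hom: "f \<in> H A B \<Longrightarrow> g \<in> H B C \<Longrightarrow> cm g f \<in> H A C"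
  using additive unfolding additive_cat_def H_def by (elim conjE) blast

lemma comp_id_left: "f \<in> H A B \<Longrightarrow> cm (idt B) f = f"
  using additive unfolding additive_cat_def H_def by (elim conjE) blast

lemma comp_id_right: "f \<in> H A B \<Longrightarrow> cm f (idt A) = f"
  using additive unfolding additive_cat_def H_def by (elim conjE) blast

lemma comp_assoc: "f \<in> H A B \<Longrightarrow> g \<in> H B C \<Longrightarrow> h \<in> H C D \<Longrightarrow>
    cm h (cm g f) = cm (cm h g) f"
  using additive unfolding additive_cat_def H_def by (elim conjE) blast

lemma zero_hom: "A \<in> Ob T \<Longrightarrow> B \<in> Ob T \<Longrightarrow> zr A B \<in> H A B"
  using hom_abelian_group unfolding H_def by blast

lemma add_hom: "f \<in> H A B \<Longrightarrow> g \<in> H A B \<Longrightarrow> ad f g \<in> H A B"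
  using hom_abelian_group unfolding H_def by blast

lemma neg_hom: "f \<in> H A B \<Longrightarrow> ng f \<in> H A B"
  using hom_abelian_group unfolding H_def by blast

lemma add_assoc: "f \<in> H A B \<Longrightarrow> g \<in> H A B \<Longrightarrow> h \<in> H A B \<Longrightarrow> ad (ad f g) h = ad f (ad g h)"
  using hom_abelian_group unfolding H_def by blast

lemma add_commute: "f \<in> H A B \<Longrightarrow> g \<in> H A B \<Longrightarrow> ad f g = ad g f"
  using hom_abelian_group unfolding H_def by blast

lemma add_zero_right: "f \<in> H A B \<Longrightarrow> ad f (zr A B) = f"
  using hom_abelian_group unfolding H_def by blast

lemma add_neg_right: "f \<in> H A B \<Longrightarrow> ad f (ng f) = zr A B"
  using hom_abelian_group unfolding H_def by blast

lemma comp_add_right: "f \<in> H A B \<Longrightarrow> f' \<in> H A B \<Longrightarrow> g \<in> H B C \<Longrightarrow>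
    cm g (ad f f') = ad (cm g f) (cm g f')"
  using comp_bilinear unfolding H_def by blast

lemma comp_add_left: "f \<in> H A B \<Longrightarrow> g \<in> H B C \<Longrightarrow> g' \<in> H B C \<Longrightarrow>
    cm (ad g g') f = ad (cm g f) (cm g' f)"
  using comp_bilinear unfolding H_def by blast

lemma zero_object_exists: obtains Z where "is_zero_obj T Z" "Z \<in> Ob T"
proof -
  have "\<exists>Z. is_zero_obj T Z" using additive unfolding additive_cat_def by (elim conjE) assumption
  thus ?thesis using that unfolding is_zero_obj_def by blast
qed

lemma biprods: "\<forall>A\<in>Ob T. \<forall>B\<in>Ob T. \<exists>P i1 i2 p1 p2. is_biprod T A B P i1 i2 p1 p2"
  using additive unfolding additive_cat_def by (elim conjE) assumption

lemma add_zero_left: "f \<in> H A B \<Longrightarrow> ad (zr A B) f = f"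
  by (metis add_commute add_zero_right zero_hom homD)

lemma add_left_cancel:
  assumes "f \<in> H A B" "g \<in> H A B" "h \<in> H A B" "ad f g = ad f h"
  shows "g = h"
proof -
  have n: "ng f \<in> H A B" using assms neg_hom by auto
  have e: "ad (ng f) f = zr A B" using assms n by (metis add_commute add_neg_right)
  have "g = ad (ad (ng f) f) g" using e add_zero_left assms by simp
  also have "\<dots> = ad (ng f) (ad f g)" using add_assoc n assms by blast
  also have "\<dots> = ad (ng f) (ad f h)" using assms by simp
  also have "\<dots> = ad (ad (ng f) f) h" using add_assoc n assms by metis
  also have "\<dots> = h" using e add_zero_left assms by simp
  finally show ?thesis .
qed

lemma neg_unique: assumes "f \<in> H A B" "g \<in> H A B" "ad f g = zr A B" shows "g = ng f"
  using add_left_cancel[OF assms(1,2) neg_hom[OF assms(1)]] assms add_neg_right by simp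

lemma neg_neg: "f \<in> H A B \<Longrightarrow> ng (ng f) = f"
  by (metis add_commute add_neg_right neg_hom neg_unique)

lemma neg_zero: "A \<in> Ob T \<Longrightarrow> B \<in> Ob T \<Longrightarrow> ng (zr A B) = zr A B"
  by (metis add_neg_right add_zero_left neg_hom zero_hom)

lemma idem_add_zero: assumes "x \<in> H A B" "ad x x = x" shows "x = zr A B"
  using add_left_cancel[OF assms(1) assms(1) zero_hom[OF homD(1,2)[OF assms(1)]]] assms
    add_zero_right by metis

lemma sub_add_cancel: assumes "a \<in> H A B" "b \<in> H A B" shows "ad (ad a (ng b)) b = a"
proof -
  have "ad (ad a (ng b)) b = ad a (ad (ng b) b)" using add_assoc assms neg_hom by blast
  also have "ad (ng b) b = zr A B" using assms add_commute add_neg_right neg_hom by metis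
  finally show ?thesis using add_zero_right assms by simp
qed

lemma add_sub_cancel_left: assumes "x \<in> H A B" "y \<in> H A B" shows "ad x (ad y (ng x)) = y"
proof -
  have "ad x (ad y (ng x)) = ad x (ad (ng x) y)" using add_commute assms neg_hom by metis
  also have "\<dots> = ad (ad x (ng x)) y" using add_assoc assms neg_hom by metis
  finally show ?thesis using add_neg_right[OF assms(1)] add_zero_left[OF assms(2)] by simp
qed

lemma sub_sub_cancel: assumes "x \<in> H A B" "y \<in> H A B" shows "ad x (ng (ad x (ng y))) = y"
proof -
  have n: "ad x (ng y) \<in> H A B" using add_hom neg_hom assms by blast
  have "ad (ad x (ng y)) (ng (ad x (ng y))) = zr A B" using add_neg_right[OF n] .
  hence "ad x (ad (ng y) (ng (ad x (ng y)))) = zr A B" using add_assoc assms neg_hom n by metis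
  hence "ad (ng y) (ng (ad x (ng y))) = ng x"
    using neg_unique[OF assms(1)] add_hom neg_hom assms n by metis
  hence "ad y (ad (ng y) (ng (ad x (ng y)))) = ad y (ng x)" by simp
  hence "ad (ad y (ng y)) (ng (ad x (ng y))) = ad y (ng x)" using add_assoc assms neg_hom n by metis
  hence "ng (ad x (ng y)) = ad y (ng x)"
    using add_neg_right[OF assms(2)] add_zero_left[OF neg_hom[OF n]] by simp
  thus ?thesis using add_sub_cancel_left[OF assms] by simp
qed

lemma sub_sub_self: assumes "i \<in> H A B" "x \<in> H A B" shows "ad (ad i (ng x)) (ng i) = ng x"
proof -
  have "ad (ad i (ng x)) (ng i) = ad i (ad (ng x) (ng i))" using add_assoc assms neg_hom by blast
  also have "ad (ng x) (ng i) = ad (ng i) (ng x)" using add_commute assms neg_hom by blast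
  also have "ad i (ad (ng i) (ng x)) = ad (ad i (ng i)) (ng x)" using add_assoc assms neg_hom by metis
  finally show ?thesis using add_neg_right[OF assms(1)] add_zero_left[OF neg_hom[OF assms(2)]] by simp
qed

lemma comp_zero_right: assumes "g \<in> H B C" "A \<in> Ob T" shows "cm g (zr A B) = zr A C"
proof -
  have z: "zr A B \<in> H A B" using zero_hom assms homD by auto
  have "cm g (zr A B) = ad (cm g (zr A B)) (cm g (zr A B))"
    using comp_add_right[OF z z assms(1)] add_zero_right[OF z] by simp
  thus ?thesis using idem_add_zero comp_hom z assms by metis
qed

lemma comp_zero_left: assumes "f \<in> H A B" "C \<in> Ob T" shows "cm (zr B C) f = zr A C"
proof -
  have z: "zr B C \<in> H B C" using zero_hom assms homD by auto
  have "cm (zr B C) f = ad (cm (zr B C) f) (cm (zr B C) f)"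
    using comp_add_left[OF assms(1) z z] add_zero_right[OF z] by simp
  thus ?thesis using idem_add_zero comp_hom z assms by metis
qed

lemma comp_neg_right: assumes "f \<in> H A B" "g \<in> H B C" shows "cm g (ng f) = ng (cm g f)"
proof -
  have "ad (cm g f) (cm g (ng f)) = cm g (ad f (ng f))" using comp_add_right assms neg_hom by simp
  also have "\<dots> = zr A C" using add_neg_right assms comp_zero_right homD by metis
  finally show ?thesis using neg_unique comp_hom neg_hom assms by metis
qed

lemma comp_neg_left: assumes "f \<in> H A B" "g \<in> H B C" shows "cm (ng g) f = ng (cm g f)"
proof -
  have "ad (cm g f) (cm (ng g) f) = cm (ad g (ng g)) f" using comp_add_left assms neg_hom by simp
  also have "\<dots> = zr A C" using add_neg_right assms comp_zero_left homD by metis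
  finally show ?thesis using neg_unique comp_hom neg_hom assms by metis
qed

lemma neg_comp_neg: "f \<in> H A B \<Longrightarrow> g \<in> H B C \<Longrightarrow> cm (ng g) (ng f) = cm g f"
  by (metis comp_neg_left comp_neg_right neg_neg neg_hom comp_hom)

lemma comp_sub_right: "f \<in> H A B \<Longrightarrow> f' \<in> H A B \<Longrightarrow> g \<in> H B C \<Longrightarrow>
    cm g (ad f (ng f')) = ad (cm g f) (ng (cm g f'))"
  by (metis comp_add_right comp_neg_right neg_hom)

lemma comp_sub_left: "f \<in> H A B \<Longrightarrow> g \<in> H B C \<Longrightarrow> g' \<in> H B C \<Longrightarrow>
    cm (ad g (ng g')) f = ad (cm g f) (ng (cm g' f))"
  by (metis comp_add_left comp_neg_left neg_hom)

lemma comp_id_minus_right: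
  assumes "f \<in> H A B" "e \<in> H A A" "cm f e = f" shows "cm f (ad (idt A) (ng e)) = zr A B"
  using comp_sub_right[OF id_hom[OF homD(1)[OF assms(1)]] assms(2,1)] assms(3)
    comp_id_right[OF assms(1)] add_neg_right[OF assms(1)] by simp

lemma comp_id_minus_left:
  assumes "f \<in> H A B" "e \<in> H B B" "cm e f = f" shows "cm (ad (idt B) (ng e)) f = zr A B"
  using comp_sub_left[OF assms(1) id_hom[OF homD(2)[OF assms(1)]] assms(2)] assms(3)
    comp_id_left[OF assms(1)] add_neg_right[OF assms(1)] by simp

lemma comp_sub_id_commute:
  assumes s: "s \<in> H A B" and u: "u \<in> H B A"
  shows "cm s (ad (cm u s) (ng (idt A))) = cm (ad (cm s u) (ng (idt B))) s"
  using comp_sub_right[OF comp_hom[OF s u] id_hom[OF homD(1)[OF s]] s]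
    comp_sub_left[OF s comp_hom[OF u s] id_hom[OF homD(2)[OF s]]]
    comp_assoc[OF s u s] comp_id_left[OF s] comp_id_right[OF s] by simp

lemma shift_axioms: "shift_autoequiv T"
  using triangulated unfolding triangulated_def by blast

lemma shift_ob_clause: "\<forall>A\<in>Ob T. sO A \<in> Ob T"
  using shift_axioms unfolding shift_autoequiv_def by (elim conjE) assumption

lemma shift_bij_clause: "\<forall>A\<in>Ob T. \<forall>B\<in>Ob T. bij_betw sM (Hom T A B) (Hom T (sO A) (sO B))"
  using shift_axioms unfolding shift_autoequiv_def by (elim conjE) assumption

lemma shift_id_clause: "\<forall>A\<in>Ob T. sM (idt A) = idt (sO A)"
  using shift_axioms unfolding shift_autoequiv_def by (elim conjE) assumption

lemma shift_comp_clause: "\<forall>A\<in>Ob T. \<forall>B\<in>Ob T. \<forall>C\<in>Ob T. \<forall>f\<in>Hom T A B. \<forall>g\<in>Hom T B C.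
    sM (cm g f) = cm (sM g) (sM f)"
  using shift_axioms unfolding shift_autoequiv_def by (elim conjE) assumption

lemma shift_add_clause: "\<forall>A\<in>Ob T. \<forall>B\<in>Ob T. \<forall>f\<in>Hom T A B. \<forall>g\<in>Hom T A B.
    sM (ad f g) = ad (sM f) (sM g)"
  using shift_axioms unfolding shift_autoequiv_def by (elim conjE) assumption

lemma shift_ess_surj_clause: "\<forall>B\<in>Ob T. \<exists>A\<in>Ob T. \<exists>e. is_iso T (sO A) B e"
  using shift_axioms unfolding shift_autoequiv_def by (elim conjE) assumption

lemma shift_ob: "A \<in> Ob T \<Longrightarrow> sO A \<in> Ob T"
  using shift_ob_clause by blast

lemma shift_hom: "f \<in> H A B \<Longrightarrow> sM f \<in> H (sO A) (sO B)"
  using shift_bij_clause shift_ob unfolding H_def bij_betw_def by blast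

lemma shift_inj: "f \<in> H A B \<Longrightarrow> g \<in> H A B \<Longrightarrow> sM f = sM g \<Longrightarrow> f = g"
  using shift_bij_clause unfolding H_def bij_betw_def inj_on_def by blast

lemma shift_surj:
  assumes "h \<in> H (sO A) (sO B)" "A \<in> Ob T" "B \<in> Ob T" shows "\<exists>f\<in>H A B. sM f = h"
proof -
  have "h \<in> sM ` Hom T A B" using shift_bij_clause assms unfolding H_def bij_betw_def by blast
  thus ?thesis using assms unfolding H_def by blast
qed

lemma shift_id: "A \<in> Ob T \<Longrightarrow> sM (idt A) = idt (sO A)"
  using shift_id_clause by blast

lemma shift_comp: "f \<in> H A B \<Longrightarrow> g \<in> H B C \<Longrightarrow> sM (cm g f) = cm (sM g) (sM f)"
  using shift_comp_clause unfolding H_def by blast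

lemma shift_add: "f \<in> H A B \<Longrightarrow> g \<in> H A B \<Longrightarrow> sM (ad f g) = ad (sM f) (sM g)"
  using shift_add_clause unfolding H_def by blast

lemma shift_ess_surj: "B \<in> Ob T \<Longrightarrow> \<exists>A\<in>Ob T. \<exists>e. is_iso T (sO A) B e"
  using shift_ess_surj_clause by blast

lemma shift_zero: assumes "A \<in> Ob T" "B \<in> Ob T" shows "sM (zr A B) = zr (sO A) (sO B)"
proof -
  have z: "zr A B \<in> H A B" using zero_hom assms by auto
  have "sM (zr A B) = ad (sM (zr A B)) (sM (zr A B))"
    using shift_add[OF z z] add_zero_right[OF z] by simp
  thus ?thesis using idem_add_zero shift_hom z by metis
qed

lemma shift_neg: assumes "f \<in> H A B" shows "sM (ng f) = ng (sM f)"
proof -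
  have "ad (sM f) (sM (ng f)) = sM (ad f (ng f))" using shift_add assms neg_hom by simp
  also have "\<dots> = zr (sO A) (sO B)" using add_neg_right assms shift_zero homD by metis
  finally show ?thesis using neg_unique shift_hom neg_hom assms by metis
qed

lemma shift_reflects_zero: assumes "f \<in> H A B" "sM f = zr (sO A) (sO B)" shows "f = zr A B"
  using shift_inj[OF assms(1) zero_hom] shift_zero assms homD by metis

lemma iso_hom: "is_iso T A B f \<Longrightarrow> A \<in> Ob T \<Longrightarrow> B \<in> Ob T \<Longrightarrow> f \<in> H A B"
  unfolding is_iso_def H_def by auto

lemma iso_inverse:
  assumes "is_iso T A B f" "A \<in> Ob T" "B \<in> Ob T"
  obtains g where "g \<in> H B A" "cm g f = idt A" "cm f g = idt B" "is_iso T B A g"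
  using assms unfolding is_iso_def H_def by blast

lemma id_iso: "A \<in> Ob T \<Longrightarrow> is_iso T A A (idt A)"
  unfolding is_iso_def using id_hom comp_id_left homD by blast

lemma iso_cancel_zero_left:
  assumes "is_iso T A B e" "A \<in> Ob T" "B \<in> Ob T" "t \<in> H C A" "cm e t = zr C B"
  shows "t = zr C A"
proof -
  obtain e' where e': "e' \<in> H B A" "cm e' e = idt A" using iso_inverse[OF assms(1-3)] by metis
  have "t = cm (cm e' e) t" using e' comp_id_left[OF assms(4)] by simp
  also have "\<dots> = cm e' (cm e t)" using comp_assoc[OF assms(4) iso_hom[OF assms(1-3)] e'(1)] by simp
  also have "\<dots> = zr C A" using assms(5) comp_zero_right[OF e'(1)] homD[OF assms(4)] by simp
  finally show ?thesis .
qed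

lemma iso_cancel_zero_right:
  assumes "is_iso T A B e" "A \<in> Ob T" "B \<in> Ob T" "t \<in> H B C" "cm t e = zr A C"
  shows "t = zr B C"
proof -
  obtain e' where e': "e' \<in> H B A" "cm e e' = idt B" using iso_inverse[OF assms(1-3)] by metis
  have "t = cm t (cm e e')" using e' comp_id_right[OF assms(4)] by simp
  also have "\<dots> = cm (cm t e) e'" using comp_assoc[OF e'(1) iso_hom[OF assms(1-3)] assms(4)] .
  also have "\<dots> = zr B C" using assms(5) comp_zero_left[OF e'(1)] homD[OF assms(4)] by simp
  finally show ?thesis .
qed

lemma triangles_typed: "\<forall>(A,B,C,f,g,h)\<in>Tr. typed_triangle T A B C f g h"
  using triangulated unfolding triangulated_def by (elim conjE) assumption

lemma triangles_iso_closed: "\<forall>A B C f g h A' B' C' f' g' h' a b c.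
    (A,B,C,f,g,h) \<in> Tr \<and> typed_triangle T A' B' C' f' g' h' \<and>
    is_iso T A A' a \<and> is_iso T B B' b \<and> is_iso T C C' c \<and>
    cm b f = cm f' a \<and> cm c g = cm g' b \<and> cm (sM a) h = cm h' c
    \<longrightarrow> (A',B',C',f',g',h') \<in> Tr"
  using triangulated unfolding triangulated_def by (elim conjE) assumption

lemma triangles_identity: "\<forall>A\<in>Ob T. \<forall>Z. is_zero_obj T Z \<longrightarrow>
    (A, A, Z, idt A, zr A Z, zr Z (sO A)) \<in> Tr"
  using triangulated unfolding triangulated_def by (elim conjE) assumption

lemma triangles_exist: "\<forall>A\<in>Ob T. \<forall>B\<in>Ob T. \<forall>f\<in>Hom T A B. \<exists>C g h. (A,B,C,f,g,h) \<in> Tr"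
  using triangulated unfolding triangulated_def by (elim conjE) assumption

lemma triangles_rotate: "\<forall>A B C f g h. typed_triangle T A B C f g h \<longrightarrow>
    ((A,B,C,f,g,h) \<in> Tr \<longleftrightarrow> (B, C, sO A, g, h, ng (sM f)) \<in> Tr)"
  using triangulated unfolding triangulated_def by (elim conjE) assumption

lemma triangles_morphism: "\<forall>A B C f g h A' B' C' f' g' h' a b.
    (A,B,C,f,g,h) \<in> Tr \<and> (A',B',C',f',g',h') \<in> Tr \<and>
    a \<in> Hom T A A' \<and> b \<in> Hom T B B' \<and> cm b f = cm f' a
    \<longrightarrow> (\<exists>c\<in>Hom T C C'. cm c g = cm g' b \<and> cm (sM a) h = cm h' c)"
  using triangulated unfolding triangulated_def by (elim conjE) assumption

lemma triangles_octahedral: "\<forall>A B C f g C' u u' A' v v' B' w w'.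
    (A,B,C',f,u,u') \<in> Tr \<and> (B,C,A',g,v,v') \<in> Tr \<and> (A,C,B',cm g f,w,w') \<in> Tr
    \<longrightarrow> (\<exists>a b. (C',B',A',a,b, cm (sM u) v') \<in> Tr \<and>
           cm a u = cm w g \<and> cm w' a = u' \<and> cm b w = v \<and> cm v' b = cm (sM f) w')"
  using triangulated unfolding triangulated_def by (elim conjE) assumption

lemma typed_triangle_iff:
  "typed_triangle T A B C f g h \<longleftrightarrow> f \<in> H A B \<and> g \<in> H B C \<and> h \<in> H C (sO A)"
  unfolding typed_triangle_def H_def using shift_ob by auto

lemma triangleD: assumes "(A,B,C,f,g,h) \<in> Tr"
  shows "f \<in> H A B" "g \<in> H B C" "h \<in> H C (sO A)" "A \<in> Ob T" "B \<in> Ob T" "C \<in> Ob T"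
proof -
  have ty: "typed_triangle T A B C f g h" using triangles_typed assms by fastforce
  thus "f \<in> H A B" "g \<in> H B C" "h \<in> H C (sO A)" using typed_triangle_iff by auto
  show "A \<in> Ob T" "B \<in> Ob T" "C \<in> Ob T" using ty unfolding typed_triangle_def by auto
qed

lemma rotate_iff: "f \<in> H A B \<Longrightarrow> g \<in> H B C \<Longrightarrow> h \<in> H C (sO A) \<Longrightarrow>
    (A,B,C,f,g,h) \<in> Tr \<longleftrightarrow> (B,C,sO A,g,h,ng (sM f)) \<in> Tr"
  using triangles_rotate typed_triangle_iff by simp

lemma rotate: assumes "(A,B,C,f,g,h) \<in> Tr" shows "(B,C,sO A,g,h,ng (sM f)) \<in> Tr"
  using rotate_iff[OF triangleD(1-3)[OF assms]] assms by blast

lemma triangle_iso_closed: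
  assumes "(A,B,C,f,g,h) \<in> Tr" "f' \<in> H A' B'" "g' \<in> H B' C'" "h' \<in> H C' (sO A')"
    "is_iso T A A' a" "is_iso T B B' b" "is_iso T C C' c"
    "cm b f = cm f' a" "cm c g = cm g' b" "cm (sM a) h = cm h' c"
  shows "(A',B',C',f',g',h') \<in> Tr"
proof -
  have "typed_triangle T A' B' C' f' g' h'" using typed_triangle_iff assms by simp
  thus ?thesis
    using triangles_iso_closed[rule_format, of A B C f g h A' B' C' f' g' h' a b c] assms by blast
qed

lemma triangle_morphism:
  assumes "(A,B,C,f,g,h) \<in> Tr" "(A',B',C',f',g',h') \<in> Tr" "a \<in> H A A'" "b \<in> H B B'"
    "cm b f = cm f' a"
  shows "\<exists>c\<in>H C C'. cm c g = cm g' b \<and> cm (sM a) h = cm h' c"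
proof -
  have "C \<in> Ob T" "C' \<in> Ob T" using triangleD assms by auto
  thus ?thesis using triangles_morphism assms unfolding H_def by blast
qed

lemma triangle_exists: "f \<in> H A B \<Longrightarrow> \<exists>C g h. (A,B,C,f,g,h) \<in> Tr"
  using triangles_exist unfolding H_def by blast

lemma octahedral:
  assumes "(A,B,C',f,u,u') \<in> Tr" "(B,C,A',g,v,v') \<in> Tr" "(A,C,B',cm g f,w,w') \<in> Tr"
  shows "\<exists>a b. (C',B',A',a,b,cm (sM u) v') \<in> Tr"
  using triangles_octahedral assms by blast

lemma triangle_comp_zero: assumes t: "(A,B,C,f,g,h) \<in> Tr" shows "cm g f = zr A C"
proof -
  obtain Z where Z: "is_zero_obj T Z" "Z \<in> Ob T" by (rule zero_object_exists)
  have A: "A \<in> Ob T" using triangleD t by auto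
  have "(A, A, Z, idt A, zr A Z, zr Z (sO A)) \<in> Tr" using triangles_identity A Z by blast
  then obtain c where c: "c \<in> H Z C" "cm c (zr A Z) = cm g f"
    using triangle_morphism[OF _ t id_hom[OF A] triangleD(1)[OF t]] by blast
  show ?thesis using c comp_zero_right A by metis
qed

lemma triangle_comp_zero_second: "(A,B,C,f,g,h) \<in> Tr \<Longrightarrow> cm h g = zr B (sO A)"
  using triangle_comp_zero[OF rotate] .

text \<open>The rotated triangle 0 \<rightarrow> Z \<rightarrow> Z \<rightarrow> 0[1], transported along an isomorphism Z \<cong> Y[1].\<close>
lemma triangle_zero_id:
  assumes Z: "Z \<in> Ob T" and Zo: "is_zero_obj T Zo"
  shows "(Zo, Z, Z, zr Zo Z, idt Z, zr Z (sO Zo)) \<in> Tr"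
proof -
  have ZoO: "Zo \<in> Ob T" using Zo unfolding is_zero_obj_def by blast
  obtain Y e where Y: "Y \<in> Ob T" "is_iso T (sO Y) Z e" using shift_ess_surj Z by blast
  have SY: "sO Y \<in> Ob T" "sO Zo \<in> Ob T" using shift_ob Y ZoO by auto
  have eH: "e \<in> H (sO Y) Z" using iso_hom Y SY Z by blast
  obtain e' where e': "e' \<in> H Z (sO Y)" "cm e' e = idt (sO Y)" "cm e e' = idt Z"
    using iso_inverse[OF Y(2) SY(1) Z] by metis
  have "(Y, Y, Zo, idt Y, zr Y Zo, zr Zo (sO Y)) \<in> Tr" using triangles_identity Y Zo by blast
  from rotate[OF rotate[OF this]]
  have t: "(Zo, sO Y, sO Y, zr Zo (sO Y), ng (idt (sO Y)), zr (sO Y) (sO Zo)) \<in> Tr"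
    using shift_id shift_zero neg_zero Y ZoO SY by metis
  have iso_ne: "is_iso T (sO Y) Z (ng e)"
    unfolding is_iso_def using neg_hom eH e' neg_comp_neg homD by metis
  show ?thesis
  proof (rule triangle_iso_closed[OF t _ _ _ id_iso[OF ZoO] Y(2) iso_ne])
    show "zr Zo Z \<in> H Zo Z" "idt Z \<in> H Z Z" "zr Z (sO Zo) \<in> H Z (sO Zo)"
      using zero_hom id_hom ZoO SY Z by auto
    show "cm e (zr Zo (sO Y)) = cm (zr Zo Z) (idt Zo)"
      using comp_zero_right eH ZoO comp_id_right zero_hom Z by metis
    show "cm (ng e) (ng (idt (sO Y))) = cm (idt Z) e"
      using neg_comp_neg id_hom SY eH comp_id_left comp_id_right by metis
    show "cm (sM (idt Zo)) (zr (sO Y) (sO Zo)) = cm (zr Z (sO Zo)) (ng e)"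
      using shift_id ZoO comp_id_left zero_hom SY comp_zero_left neg_hom eH by metis
  qed
qed

subsection \<open>Long exact Hom sequences\<close>

text \<open>Naming: cov_exact_B says that Hom(Z, -) applied to A \<rightarrow> B \<rightarrow> C is exact at B,
  contra_exact_B the same for Hom(-, Z); the variants at C and at A[1] follow by rotation.\<close>

lemma cov_exact_B:
  assumes t: "(A,B,C,f,g,h) \<in> Tr" and phi: "\<phi> \<in> H Z B" and e: "cm g \<phi> = zr Z C"
  shows "\<exists>u\<in>H Z A. \<phi> = cm f u"
proof -
  obtain Zo where Zo: "is_zero_obj T Zo" "Zo \<in> Ob T" by (rule zero_object_exists)
  have Ob: "A \<in> Ob T" "B \<in> Ob T" "C \<in> Ob T" "Z \<in> Ob T" using triangleD t homD phi by auto
  have "(Z, Z, Zo, idt Z, zr Z Zo, zr Zo (sO Z)) \<in> Tr" using triangles_identity Ob Zo by blast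
  note t1 = rotate[OF this]
  have zb: "zr Zo C \<in> H Zo C" using zero_hom Zo Ob by blast
  have "cm (zr Zo C) (zr Z Zo) = cm g \<phi>" using comp_zero_left zero_hom Zo Ob e by metis
  then obtain c where c: "c \<in> H (sO Z) (sO A)" "cm (sM \<phi>) (ng (sM (idt Z))) = cm (ng (sM f)) c"
    using triangle_morphism[OF t1 rotate[OF t] phi zb] by blast
  have fH: "f \<in> H A B" using triangleD t by auto
  have "cm (sM \<phi>) (ng (sM (idt Z))) = ng (sM \<phi>)"
    using shift_id Ob comp_neg_right id_hom shift_ob shift_hom phi comp_id_right by metis
  moreover have "cm (ng (sM f)) c = ng (cm (sM f) c)" using comp_neg_left c shift_hom fH by metis
  ultimately have "sM \<phi> = cm (sM f) c"
    using c(2) neg_neg shift_hom phi comp_hom c(1) fH by metis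
  moreover obtain u where u: "u \<in> H Z A" "sM u = c" using shift_surj c Ob by blast
  ultimately have "sM \<phi> = sM (cm f u)" using shift_comp fH by metis
  hence "\<phi> = cm f u" using shift_inj phi comp_hom u fH by metis
  thus ?thesis using u by blast
qed

lemma contra_exact_B:
  assumes t: "(A,B,C,f,g,h) \<in> Tr" and phi: "\<phi> \<in> H B Z" and e: "cm \<phi> f = zr A Z"
  shows "\<exists>u\<in>H C Z. \<phi> = cm u g"
proof -
  obtain Zo where Zo: "is_zero_obj T Zo" "Zo \<in> Ob T" by (rule zero_object_exists)
  have Ob: "A \<in> Ob T" "Z \<in> Ob T" using triangleD t homD phi by auto
  have za: "zr A Zo \<in> H A Zo" using zero_hom Zo Ob by blast
  have "cm \<phi> f = cm (zr Zo Z) (zr A Zo)" using comp_zero_left zero_hom Zo Ob e by metis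
  then obtain c where "c \<in> H C Z" "cm c g = cm (idt Z) \<phi>"
    using triangle_morphism[OF t triangle_zero_id[OF Ob(2) Zo(1)] za phi] by blast
  thus ?thesis using comp_id_left phi by metis
qed

lemma cov_exact_C:
  "(A,B,C,f,g,h) \<in> Tr \<Longrightarrow> \<phi> \<in> H Z C \<Longrightarrow> cm h \<phi> = zr Z (sO A) \<Longrightarrow> \<exists>u\<in>H Z B. \<phi> = cm g u"
  using cov_exact_B[OF rotate] .

lemma contra_exact_C:
  "(A,B,C,f,g,h) \<in> Tr \<Longrightarrow> \<phi> \<in> H C Z \<Longrightarrow> cm \<phi> g = zr B Z \<Longrightarrow> \<exists>u\<in>H (sO A) Z. \<phi> = cm u h"
  using contra_exact_B[OF rotate] .

lemma cov_exact_A: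
  assumes t: "(A,B,C,f,g,h) \<in> Tr" and phi: "\<phi> \<in> H Z A" and e: "cm f \<phi> = zr Z B"
  shows "\<exists>u\<in>H (sO Z) C. sM \<phi> = cm h u"
proof -
  have fH: "f \<in> H A B" using triangleD t by auto
  have Z: "Z \<in> Ob T" using homD phi by auto
  have "cm (ng (sM f)) (sM \<phi>) = ng (sM (cm f \<phi>))"
    using comp_neg_left shift_comp shift_hom phi fH by metis
  also have "\<dots> = zr (sO Z) (sO B)" using e shift_zero neg_zero Z homD fH shift_ob by metis
  finally show ?thesis using cov_exact_B[OF rotate[OF rotate[OF t]] shift_hom[OF phi]] by blast
qed

lemma contra_exact_A:
  "(A,B,C,f,g,h) \<in> Tr \<Longrightarrow> \<phi> \<in> H (sO A) Z \<Longrightarrow> cm \<phi> h = zr C Z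
   \<Longrightarrow> \<exists>u\<in>H (sO B) Z. \<phi> = cm u (ng (sM f))"
  using contra_exact_B[OF rotate[OF rotate]] .

lemma contra_exact_A_unshift:
  assumes t: "(A,B,C,f,g,h) \<in> Tr" and \<phi>: "\<phi> \<in> H A Z" and e: "cm (sM \<phi>) h = zr C (sO Z)"
  shows "\<exists>u\<in>H B Z. \<phi> = cm u f"
proof -
  have fH: "f \<in> H A B" and Ob: "B \<in> Ob T" "Z \<in> Ob T" using triangleD t homD \<phi> by auto
  obtain u0 where u0: "u0 \<in> H (sO B) (sO Z)" "sM \<phi> = cm u0 (ng (sM f))"
    using contra_exact_A[OF t shift_hom[OF \<phi>] e] by blast
  obtain u where u: "u \<in> H B Z" "sM u = u0" using shift_surj[OF u0(1) Ob] by blast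
  have "sM \<phi> = sM (cm (ng u) f)"
    using u0(2) u comp_neg_right[OF shift_hom[OF fH] shift_hom[OF u(1)]] shift_comp[OF fH u(1)]
      shift_neg[OF comp_hom[OF fH u(1)]] comp_neg_left[OF fH u(1)] by simp
  hence "\<phi> = cm (ng u) f" using shift_inj[OF \<phi> comp_hom[OF fH neg_hom[OF u(1)]]] by blast
  thus ?thesis using neg_hom[OF u(1)] by blast
qed

subsection \<open>Split triangles and biproducts\<close>

lemma biprodD: assumes "is_biprod T A B P i1 i2 p1 p2"
  shows "i1 \<in> H A P" "i2 \<in> H B P" "p1 \<in> H P A" "p2 \<in> H P B"
    "cm p1 i1 = idt A" "cm p2 i2 = idt B" "cm p1 i2 = zr B A" "cm p2 i1 = zr A B"
    "ad (cm i1 p1) (cm i2 p2) = idt P"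
  using assms unfolding is_biprod_def H_def by auto

lemma biprod_swap: assumes "is_biprod T A B P i1 i2 p1 p2" shows "is_biprod T B A P i2 i1 p2 p1"
proof -
  note d = biprodD[OF assms]
  have "ad (cm i2 p2) (cm i1 p1) = idt P"
    using d(9) add_commute[OF comp_hom[OF d(3) d(1)] comp_hom[OF d(4) d(2)]] by simp
  thus ?thesis using assms unfolding is_biprod_def by auto
qed

text \<open>The second injection is t - f p t.\<close>
lemma biprod_of_split_exact:
  assumes fH: "f \<in> H A B" and gH: "g \<in> H B C" and pH: "p \<in> H B A" and tH: "t \<in> H C B"
    and pf: "cm p f = idt A" and gt: "cm g t = idt C" and gf: "cm g f = zr A C"
    and exact: "\<And>e. e \<in> H B B \<Longrightarrow> cm g e = zr B C \<Longrightarrow> \<exists>w\<in>H B A. e = cm f w"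
  shows "\<exists>i2. is_biprod T A C B f i2 p g"
proof -
  have Ob: "A \<in> Ob T" "B \<in> Ob T" "C \<in> Ob T" using homD fH gH by auto
  have pt: "cm p t \<in> H C A" using comp_hom[OF tH pH] .
  have fpt: "cm f (cm p t) \<in> H C B" using comp_hom[OF pt fH] .
  define i2 where "i2 = ad t (ng (cm f (cm p t)))"
  have i2H: "i2 \<in> H C B" using i2_def add_hom neg_hom fpt tH by blast
  have "cm g (cm f (cm p t)) = zr C C"
    using comp_assoc[OF pt fH gH] gf comp_zero_left[OF pt Ob(3)] by simp
  hence gi2: "cm g i2 = idt C"
    using comp_sub_right[OF tH fpt gH] i2_def gt neg_zero[OF Ob(3) Ob(3)]
      add_zero_right[OF id_hom[OF Ob(3)]] by simp
  have "cm p (cm f (cm p t)) = cm p t"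
    using comp_assoc[OF pt fH pH] pf comp_id_left[OF pt] by simp
  hence pi2: "cm p i2 = zr C A"
    using comp_sub_right[OF tH fpt pH] i2_def add_neg_right[OF pt] by simp
  define x where "x = cm f p"
  define y where "y = cm t g"
  have xH: "x \<in> H B B" and yH: "y \<in> H B B" using x_def y_def comp_hom fH pH gH tH by blast+
  have idB: "idt B \<in> H B B" using id_hom Ob by blast
  define e where "e = ad (idt B) (ng y)"
  have eH: "e \<in> H B B" using e_def add_hom neg_hom idB yH by blast
  have "cm g y = g" using y_def comp_assoc[OF gH tH gH] gt comp_id_left[OF gH] by simp
  hence "cm g e = zr B C"
    using e_def comp_sub_right[OF idB yH gH] comp_id_right[OF gH] add_neg_right[OF gH] by simp
  then obtain w where w: "w \<in> H B A" "e = cm f w" using exact eH by blast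
  have "cm x e = cm f (cm (cm p f) w)"
    using x_def w comp_assoc[OF comp_hom[OF w(1) fH] pH fH] comp_assoc[OF w(1) fH pH] by simp
  hence "cm x e = e" using pf comp_id_left[OF w(1)] w(2) by simp
  hence xe: "ad x (ng (cm x y)) = e"
    using e_def comp_sub_right[OF idB yH xH] comp_id_right[OF xH] by simp
  have "cm (cm f (cm p t)) g = cm x y"
    using x_def y_def comp_assoc[OF gH pt fH] comp_assoc[OF gH tH pH]
      comp_assoc[OF comp_hom[OF gH tH] pH fH] by simp
  hence "cm i2 g = ad y (ng (cm x y))"
    using i2_def comp_sub_left[OF gH tH fpt] y_def by simp
  moreover have "cm x y \<in> H B B" using comp_hom xH yH by blast
  ultimately have "ad x (cm i2 g) = ad (ad x (ng (cm x y))) y"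
    using xH yH neg_hom add_assoc add_commute by metis
  also have "\<dots> = idt B" using xe e_def sub_add_cancel[OF idB yH] by simp
  finally have "ad (cm f p) (cm i2 g) = idt B" using x_def by simp
  hence "is_biprod T A C B f i2 p g"
    unfolding is_biprod_def using Ob homD(3) fH gH pH i2H pf gi2 pi2 gf by simp
  thus ?thesis by blast
qed

lemma triangle_split:
  assumes t: "(A,B,C,f,g,h) \<in> Tr" and h0: "h = zr C (sO A)"
  shows "\<exists>i2 p. is_biprod T A C B f i2 p g"
proof -
  have Ob: "A \<in> Ob T" "C \<in> Ob T" "sO A \<in> Ob T" using triangleD t shift_ob by auto
  have fH: "f \<in> H A B" and gH: "g \<in> H B C" and hH: "h \<in> H C (sO A)" using triangleD t by auto
  have "cm h (idt C) = zr C (sO A)" using comp_id_right hH h0 by metis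
  then obtain s where s: "s \<in> H C B" "idt C = cm g s"
    using cov_exact_C[OF t id_hom[OF Ob(2)]] by metis
  have "cm (idt (sO A)) h = zr C (sO A)" using comp_id_left hH h0 by metis
  then obtain u where u: "u \<in> H (sO B) (sO A)" "idt (sO A) = cm u (ng (sM f))"
    using contra_exact_A[OF t id_hom[OF Ob(3)]] by metis
  obtain p0 where p0: "p0 \<in> H B A" "sM p0 = u" using shift_surj u Ob homD fH by metis
  have "cm u (ng (sM f)) = sM (ng (cm p0 f))"
    using p0 comp_neg_right shift_comp shift_hom fH shift_neg comp_hom by metis
  hence "sM (idt A) = sM (ng (cm p0 f))" using u shift_id Ob by simp
  hence "idt A = ng (cm p0 f)" using shift_inj[OF id_hom[OF Ob(1)] neg_hom[OF comp_hom[OF fH p0(1)]]] by blast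
  hence pf: "cm (ng p0) f = idt A" using comp_neg_left p0 fH by metis
  show ?thesis
    using biprod_of_split_exact[OF fH gH neg_hom[OF p0(1)] s(1) pf s(2)[symmetric]
        triangle_comp_zero[OF t]] cov_exact_B[OF t] by blast
qed

lemma triangle_split_first:
  assumes t: "(A,B,C,f,g,h) \<in> Tr" and f0: "f = zr A B"
  shows "\<exists>i2 p. is_biprod T B (sO A) C g i2 p h"
proof -
  have "ng (sM f) = zr (sO A) (sO B)"
    using f0 shift_zero neg_zero shift_ob triangleD[OF t] by simp
  thus ?thesis using triangle_split[OF rotate[OF t]] by blast
qed

lemma rotate_back:
  assumes t: "(B,C,D,g,h,k) \<in> Tr" and A: "A \<in> Ob T" and e: "is_iso T (sO A) D e"
  shows "\<exists>f t. f \<in> H A B \<and> t \<in> H C (sO A) \<and> (A,B,C,f,g,t) \<in> Tr \<and> cm e t = h"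
proof -
  have Ob: "B \<in> Ob T" "C \<in> Ob T" "D \<in> Ob T" "sO A \<in> Ob T" using triangleD t shift_ob A by auto
  have gH: "g \<in> H B C" and hH: "h \<in> H C D" and kH: "k \<in> H D (sO B)" using triangleD t by auto
  have eH: "e \<in> H (sO A) D" using iso_hom e Ob by blast
  obtain e' where e': "e' \<in> H D (sO A)" "cm e' e = idt (sO A)" "cm e e' = idt D" "is_iso T D (sO A) e'"
    using iso_inverse[OF e Ob(4) Ob(3)] by blast
  have eh: "cm e' h \<in> H C (sO A)" using comp_hom hH e' by blast
  have ke: "cm k e \<in> H (sO A) (sO B)" using comp_hom kH eH by blast
  have t1: "(B, C, sO A, g, cm e' h, cm k e) \<in> Tr"
  proof (rule triangle_iso_closed[OF t gH eh ke id_iso[OF Ob(1)] id_iso[OF Ob(2)] e'(4)])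
    show "cm (idt C) g = cm g (idt B)" using comp_id_left[OF gH] comp_id_right[OF gH] by simp
    show "cm e' h = cm (cm e' h) (idt C)" using comp_id_right[OF eh] by simp
    have "cm (cm k e) e' = k" using comp_assoc[OF e'(1) eH kH] e'(3) comp_id_right[OF kH] by simp
    thus "cm (sM (idt B)) k = cm (cm k e) e'" using shift_id[OF Ob(1)] comp_id_left[OF kH] by simp
  qed
  obtain f where f: "f \<in> H A B" "sM f = ng (cm k e)" using shift_surj[OF neg_hom[OF ke] A Ob(1)] by blast
  have "ng (sM f) = cm k e" using f neg_neg[OF ke] by simp
  hence "(A,B,C,f,g,cm e' h) \<in> Tr" using t1 rotate_iff[OF f(1) gH eh] by simp
  moreover have "cm e (cm e' h) = h" using comp_assoc[OF hH e'(1) eH] e'(3) comp_id_left[OF hH] by simp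
  ultimately show ?thesis using f eh by blast
qed

lemma unrotate_shifted:
  assumes fH: "f \<in> H A B" and gH: "g \<in> H B C" and hH: "h \<in> H C (sO A)"
    and t: "(sO A, sO B, sO C, ng (sM f), ng (sM g), ng (sM h)) \<in> Tr"
  shows "(A,B,C,f,g,h) \<in> Tr"
proof -
  have nf: "ng (sM f) \<in> H (sO A) (sO B)" and ng: "ng (sM g) \<in> H (sO B) (sO C)"
    using neg_hom shift_hom fH gH by blast+
  have "(C, sO A, sO B, h, ng (sM f), ng (sM g)) \<in> Tr" using rotate_iff[OF hH nf ng] t by blast
  hence "(B, C, sO A, g, h, ng (sM f)) \<in> Tr" using rotate_iff[OF gH hH nf] by blast
  thus ?thesis using rotate_iff[OF fH gH hH] by blast
qed

lemma retract_biprod: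
  assumes i: "i \<in> H A P" and p: "p \<in> H P A" and pi: "cm p i = idt A"
  shows "\<exists>C i2 p1 p2. is_biprod T A C P i i2 p1 p2"
proof -
  obtain C g h where t: "(A,P,C,i,g,h) \<in> Tr" using triangle_exists[OF i] by blast
  have hH: "h \<in> H C (sO A)" and Ob: "A \<in> Ob T" "C \<in> Ob T" using triangleD t by auto
  have "cm (sM i) h = zr C (sO P)"
    using triangle_comp_zero[OF rotate[OF rotate[OF t]]] comp_neg_left[OF hH shift_hom[OF i]]
      neg_neg neg_zero shift_ob homD[OF i] Ob comp_hom[OF hH shift_hom[OF i]] by metis
  moreover have "idt (sO A) = cm (sM p) (sM i)" using pi shift_comp[OF i p] shift_id[OF Ob(1)] by simp
  ultimately have "h = zr C (sO A)"
    using comp_id_left[OF hH] comp_assoc[OF hH shift_hom[OF i] shift_hom[OF p]]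
      comp_zero_right[OF shift_hom[OF p] Ob(2)] by simp
  thus ?thesis using triangle_split[OF t] by blast
qed

lemma triangle_split_middle:
  assumes t: "(P, Y, R, a, b, c) \<in> Tr" and b0: "b = zr Y R"
    and R0: "R0 \<in> Ob T" "is_iso T (sO R0) R e"
  shows "\<exists>f0 i2 p. is_biprod T R0 Y P f0 i2 p a"
proof -
  have RO: "R \<in> Ob T" using triangleD t by auto
  obtain f0 t' where rb: "t' \<in> H Y (sO R0)" "(R0, P, Y, f0, a, t') \<in> Tr" "cm e t' = b"
    using rotate_back[OF t R0] by blast
  have "t' = zr Y (sO R0)" using iso_cancel_zero_left[OF R0(2) shift_ob[OF R0(1)] RO rb(1)] rb(3) b0 by simp
  thus ?thesis using triangle_split[OF rb(2)] by blast
qed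

text \<open>Up to isomorphism the triangle is the shift of a triangle L \<rightarrow> W0 \<rightarrow> W \<rightarrow> L[1] with
  vanishing first map, which splits.\<close>
lemma shifted_triangle_split_first:
  assumes t: "(sO L, D, C, zr (sO L) D, y, z) \<in> Tr" and L: "L \<in> Ob T"
    and W0: "W0 \<in> Ob T" "is_iso T (sO W0) D e0" and W: "W \<in> Ob T" "is_iso T (sO W) C e"
  shows "\<exists>g0 i p h0. is_biprod T W0 (sO L) W g0 i p h0"
proof -
  have Ob: "D \<in> Ob T" "C \<in> Ob T" and SO: "sO L \<in> Ob T" "sO W0 \<in> Ob T" "sO W \<in> Ob T"
    using triangleD t shift_ob L W0 W by auto
  have yH: "y \<in> H D C" and zH: "z \<in> H C (sO (sO L))" using triangleD t by auto
  obtain e0' where e0': "e0' \<in> H D (sO W0)" "cm e0 e0' = idt D" "is_iso T D (sO W0) e0'"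
    using iso_inverse[OF W0(2) SO(2) Ob(1)] by metis
  obtain e' where e': "e' \<in> H C (sO W)" "cm e e' = idt C" "is_iso T C (sO W) e'"
    using iso_inverse[OF W(2) SO(3) Ob(2)] by metis
  have e0H: "e0 \<in> H (sO W0) D" and eH: "e \<in> H (sO W) C" using iso_hom W0 W SO Ob by blast+
  define g1 where "g1 = cm e' (cm y e0)"
  define h1 where "h1 = cm z e"
  have g1H: "g1 \<in> H (sO W0) (sO W)" and h1H: "h1 \<in> H (sO W) (sO (sO L))"
    using g1_def h1_def comp_hom e0H yH e' eH zH by blast+
  have t1: "(sO L, sO W0, sO W, zr (sO L) (sO W0), g1, h1) \<in> Tr"
  proof (rule triangle_iso_closed[OF t zero_hom[OF SO(1,2)] g1H h1H id_iso[OF SO(1)] e0'(3) e'(3)])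
    show "cm e0' (zr (sO L) D) = cm (zr (sO L) (sO W0)) (idt (sO L))"
      using comp_zero_right[OF e0'(1) SO(1)] comp_zero_left[OF id_hom[OF SO(1)] SO(2)] by simp
    have "cm g1 e0' = cm e' (cm y (cm e0 e0'))"
      using g1_def comp_assoc[OF e0'(1) e0H yH] comp_assoc[OF e0'(1) comp_hom[OF e0H yH] e'(1)] by simp
    thus "cm e' y = cm g1 e0'" using e0'(2) comp_id_right[OF yH] by simp
    have "cm h1 e' = cm z (cm e e')" using h1_def comp_assoc[OF e'(1) eH zH] by simp
    thus "cm (sM (idt (sO L))) z = cm h1 e'"
      using e'(2) comp_id_right[OF zH] shift_id[OF SO(1)] comp_id_left[OF zH] by simp
  qed
  obtain g0 where g0: "g0 \<in> H W0 W" "sM g0 = ng g1" using shift_surj[OF neg_hom[OF g1H] W0(1) W(1)] by blast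
  obtain h0 where h0: "h0 \<in> H W (sO L)" "sM h0 = ng h1" using shift_surj[OF neg_hom[OF h1H] W(1) SO(1)] by blast
  have nz: "ng (sM (zr L W0)) = zr (sO L) (sO W0)"
    using shift_zero[OF L W0(1)] neg_zero[OF SO(1) SO(2)] by simp
  have "(L, W0, W, zr L W0, g0, h0) \<in> Tr"
    using unrotate_shifted[OF zero_hom[OF L W0(1)] g0(1) h0(1)] t1 nz g0(2) h0(2)
      neg_neg[OF g1H] neg_neg[OF h1H] by simp
  thus ?thesis using triangle_split_first by blast
qed

subsection \<open>Maps factoring through a class of objects\<close>

definition biprod_closed :: "'o set \<Rightarrow> bool" where
  "biprod_closed K \<longleftrightarrow> (\<forall>A\<in>K. \<forall>B\<in>K. \<forall>P i1 i2 p1 p2. is_biprod T A B P i1 i2 p1 p2 \<longrightarrow> P \<in> K)"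

lemma biprod_closedD:
  "biprod_closed K \<Longrightarrow> A \<in> K \<Longrightarrow> B \<in> K \<Longrightarrow> is_biprod T A B P i1 i2 p1 p2 \<Longrightarrow> P \<in> K"
  unfolding biprod_closed_def by blast

lemma factors_throughI: "X \<in> K \<Longrightarrow> a \<in> H A X \<Longrightarrow> b \<in> H X B \<Longrightarrow> factors_through T K A B (cm b a)"
  unfolding factors_through_def H_def by blast

lemma factors_throughE:
  assumes "factors_through T K A B f" "K \<subseteq> Ob T" "A \<in> Ob T" "B \<in> Ob T"
  obtains X a b where "X \<in> K" "a \<in> H A X" "b \<in> H X B" "f = cm b a"
  using assms unfolding factors_through_def H_def by blast

lemma factors_through_comp_left:
  assumes "factors_through T K A B f" "g \<in> H B C" "K \<subseteq> Ob T" "A \<in> Ob T"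
  shows "factors_through T K A C (cm g f)"
proof -
  obtain X a b where x: "X \<in> K" "a \<in> H A X" "b \<in> H X B" "f = cm b a"
    using factors_throughE assms homD by metis
  have "cm g f = cm (cm g b) a" using x comp_assoc[OF x(2) x(3) assms(2)] by simp
  thus ?thesis using factors_throughI[OF x(1) x(2) comp_hom[OF x(3) assms(2)]] by simp
qed

lemma factors_through_comp_right:
  assumes "factors_through T K B C f" "g \<in> H A B" "K \<subseteq> Ob T" "C \<in> Ob T"
  shows "factors_through T K A C (cm f g)"
proof -
  obtain X a b where x: "X \<in> K" "a \<in> H B X" "b \<in> H X C" "f = cm b a"
    using factors_throughE assms homD by metis
  have "cm f g = cm b (cm a g)" using x comp_assoc[OF assms(2) x(2) x(3)] by simp
  thus ?thesis using factors_throughI[OF x(1) comp_hom[OF assms(2) x(2)] x(3)] by simp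
qed

lemma factors_through_neg:
  assumes "factors_through T K A B f" "K \<subseteq> Ob T" "A \<in> Ob T" "B \<in> Ob T"
  shows "factors_through T K A B (ng f)"
proof -
  obtain X a b where x: "X \<in> K" "a \<in> H A X" "b \<in> H X B" "f = cm b a"
    using factors_throughE assms by metis
  have "ng f = cm (ng b) a" using x comp_neg_left[OF x(2) x(3)] by simp
  thus ?thesis using factors_throughI[OF x(1) x(2) neg_hom[OF x(3)]] by simp
qed

text \<open>f = b1 a1 and g = b2 a2 give f + g = (b1 p1 + b2 p2)(i1 a1 + i2 a2) through X1 \<oplus> X2.\<close>
lemma factors_through_add:
  assumes f: "factors_through T K A B f" and g: "factors_through T K A B g"
    and K: "K \<subseteq> Ob T" "biprod_closed K" and Ob: "A \<in> Ob T" "B \<in> Ob T"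
  shows "factors_through T K A B (ad f g)"
proof -
  obtain X1 a1 b1 where 1: "X1 \<in> K" "a1 \<in> H A X1" "b1 \<in> H X1 B" "f = cm b1 a1"
    using factors_throughE f K Ob by metis
  obtain X2 a2 b2 where 2: "X2 \<in> K" "a2 \<in> H A X2" "b2 \<in> H X2 B" "g = cm b2 a2"
    using factors_throughE g K Ob by metis
  have X: "X1 \<in> Ob T" "X2 \<in> Ob T" using 1 2 K by auto
  obtain P i1 i2 p1 p2 where P: "is_biprod T X1 X2 P i1 i2 p1 p2" using biprods X by blast
  note bd = biprodD[OF P]
  have PK: "P \<in> K" using biprod_closedD[OF K(2) 1(1) 2(1) P] .
  define a where "a = ad (cm i1 a1) (cm i2 a2)"
  define b where "b = ad (cm b1 p1) (cm b2 p2)"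
  have i1a: "cm i1 a1 \<in> H A P" and i2a: "cm i2 a2 \<in> H A P" using comp_hom bd 1 2 by blast+
  have b1p: "cm b1 p1 \<in> H P B" and b2p: "cm b2 p2 \<in> H P B" using comp_hom bd 1 2 by blast+
  have aH: "a \<in> H A P" using a_def add_hom i1a i2a by blast
  have bH: "b \<in> H P B" using b_def add_hom b1p b2p by blast
  have bi1: "cm b i1 = b1"
  proof -
    have "cm (cm b1 p1) i1 = b1" using comp_assoc[OF bd(1) bd(3) 1(3)] bd(5) comp_id_right[OF 1(3)] by simp
    moreover have "cm (cm b2 p2) i1 = zr X1 B"
      using comp_assoc[OF bd(1) bd(4) 2(3)] bd(8) comp_zero_right[OF 2(3) X(1)] by simp
    ultimately show ?thesis using b_def comp_add_left[OF bd(1) b1p b2p] add_zero_right[OF 1(3)] by simp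
  qed
  have bi2: "cm b i2 = b2"
  proof -
    have "cm (cm b1 p1) i2 = zr X2 B"
      using comp_assoc[OF bd(2) bd(3) 1(3)] bd(7) comp_zero_right[OF 1(3) X(2)] by simp
    moreover have "cm (cm b2 p2) i2 = b2" using comp_assoc[OF bd(2) bd(4) 2(3)] bd(6) comp_id_right[OF 2(3)] by simp
    ultimately show ?thesis using b_def comp_add_left[OF bd(2) b1p b2p] add_zero_left[OF 2(3)] by simp
  qed
  have "cm b a = ad (cm b1 a1) (cm b2 a2)"
    using a_def comp_add_right[OF i1a i2a bH] comp_assoc[OF 1(2) bd(1) bH] comp_assoc[OF 2(2) bd(2) bH]
      bi1 bi2 by simp
  thus ?thesis using factors_throughI[OF PK aH bH] 1 2 by simp
qed

lemma id_factors_through_summand_closed: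
  assumes K: "K \<subseteq> Ob T" "closed_summands T K" and A: "A \<in> Ob T"
    and ft: "factors_through T K A A (idt A)"
  shows "A \<in> K"
proof -
  obtain P a b where P: "P \<in> K" "a \<in> H A P" "b \<in> H P A" "idt A = cm b a"
    using factors_throughE[OF ft K(1) A A] by blast
  obtain C i2 p1 p2 where "is_biprod T A C P a i2 p1 p2" using retract_biprod[OF P(2) P(3)] P(4) by metis
  thus ?thesis using K(2) P(1) unfolding closed_summands_def by blast
qed

lemma shift_factors_through:
  assumes fH: "f \<in> H A B" and nH: "n \<in> H A C" and n: "factors_through T K A C n"
    and K: "K \<subseteq> Ob T"
    and \<phi>: "\<phi> \<in> H (sO C) (sO B)" and f: "sM f = cm \<phi> (sM n)"
  shows "factors_through T K A B f"
proof -
  have Ob: "A \<in> Ob T" "B \<in> Ob T" "C \<in> Ob T" using homD fH nH by auto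
  obtain Y n1 n2 where y: "Y \<in> K" "n1 \<in> H A Y" "n2 \<in> H Y C" "n = cm n2 n1"
    using factors_throughE[OF n K Ob(1,3)] by blast
  obtain m where m: "m \<in> H Y B" "sM m = cm \<phi> (sM n2)"
    using shift_surj[OF comp_hom[OF shift_hom[OF y(3)] \<phi>]] homD y(2) Ob by blast
  have "sM f = cm (sM m) (sM n1)"
    using f y(4) shift_comp[OF y(2,3)] m(2) comp_assoc[OF shift_hom[OF y(2)] shift_hom[OF y(3)] \<phi>] by simp
  hence "f = cm m n1" using shift_comp[OF y(2) m(1)] shift_inj[OF fH comp_hom[OF y(2) m(1)]] by simp
  thus ?thesis using factors_throughI[OF y(1,2) m(1)] by simp
qed

text \<open>1 = c a + (1 - c a) factors through K, so A is a retract of an object of K.\<close>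
lemma in_class_if_complement_factors:
  assumes K: "K \<subseteq> Ob T" "biprod_closed K" "closed_summands T K"
    and a: "X0 \<in> K" "a \<in> H A X0" "c \<in> H X0 A"
    and d: "factors_through T K A A (ad (idt A) (ng (cm c a)))"
  shows "A \<in> K"
proof -
  have A: "A \<in> Ob T" using homD a by auto
  have "ad (cm c a) (ad (idt A) (ng (cm c a))) = idt A"
    using add_sub_cancel_left comp_hom a id_hom A by blast
  thus ?thesis
    using factors_through_add[OF factors_throughI[OF a] d K(1,2) A A]
      id_factors_through_summand_closed[OF K(1,3) A] by simp
qed

lemma additive_subcatD:
  assumes "additive_subcat T S"
  shows "S \<subseteq> Ob T" "biprod_closed S"
  using assms unfolding additive_subcat_def biprod_closed_def by blast+

lemma triangulated_subcat_shift_iff: "triangulated_subcat T N \<Longrightarrow> A \<in> Ob T \<Longrightarrow> A \<in> N \<longleftrightarrow> sO A \<in> N"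
  unfolding triangulated_subcat_def by blast

lemma triangulated_subcat_third:
  "triangulated_subcat T N \<Longrightarrow> (A,B,C,f,g,h) \<in> Tr \<Longrightarrow> A \<in> N \<Longrightarrow> B \<in> N \<Longrightarrow> C \<in> N"
  unfolding triangulated_subcat_def by blast

lemma triangulated_subcat_first:
  assumes N: "triangulated_subcat T N" and t: "(A,B,C,f,g,h) \<in> Tr" "B \<in> N" "C \<in> N"
  shows "A \<in> N"
  using triangulated_subcat_third[OF N rotate[OF t(1)] t(2,3)]
    triangulated_subcat_shift_iff[OF N] triangleD(4)[OF t(1)] by blast

lemma triangulated_subcat_second:
  assumes N: "triangulated_subcat T N" and t: "(A,B,C,f,g,h) \<in> Tr" "A \<in> N" "C \<in> N"
  shows "B \<in> N"
  using triangulated_subcat_third[OF N rotate[OF rotate[OF t(1)]] t(3)]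
    triangulated_subcat_shift_iff[OF N] triangleD(4,5)[OF t(1)] t(2) by blast

lemma rperp_zero: "Y \<in> U \<Longrightarrow> R \<in> rperp T U \<Longrightarrow> f \<in> H Y R \<Longrightarrow> f = zr Y R"
  unfolding rperp_def H_def by auto

lemma lperp_zero: "L \<in> lperp T V \<Longrightarrow> Y \<in> V \<Longrightarrow> f \<in> H L Y \<Longrightarrow> f = zr L Y"
  unfolding lperp_def H_def by auto

lemma precover_of_triangle:
  assumes U: "U \<subseteq> Ob T" and t: "(P, A, R, c, d, e) \<in> Tr" and P: "P \<in> U" and R: "R \<in> rperp T U"
  shows "is_precover T U P A c"
  unfolding is_precover_def
proof (intro conjI ballI)
  show "P \<in> U" "c \<in> Hom T P A" using P triangleD(1)[OF t] homD by auto
  fix Y f assume Y: "Y \<in> U" "f \<in> Hom T Y A"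
  hence fH: "f \<in> H Y A" using U triangleD(5)[OF t] H_iff by blast
  have "cm d f = zr Y R" using rperp_zero[OF Y(1) R comp_hom[OF fH triangleD(2)[OF t]]] .
  thus "\<exists>h\<in>Hom T Y P. f = cm c h" using cov_exact_B[OF t fH] homD by blast
qed

lemma preenvelope_of_triangle:
  assumes V: "V \<subseteq> Ob T" and t: "(L, A, R, l, j, k) \<in> Tr" and L: "L \<in> lperp T V" and R: "R \<in> V"
  shows "is_preenvelope T V A R j"
  unfolding is_preenvelope_def
proof (intro conjI ballI)
  show "R \<in> V" "j \<in> Hom T A R" using R triangleD(2)[OF t] homD by auto
  fix Y f assume Y: "Y \<in> V" "f \<in> Hom T A Y"
  hence fH: "f \<in> H A Y" using V triangleD(5)[OF t] H_iff by blast
  have "cm f l = zr L Y" using lperp_zero[OF L Y(1) comp_hom[OF triangleD(1)[OF t] fH]] .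
  thus "\<exists>h\<in>Hom T R Y. f = cm h j" using contra_exact_B[OF t fH] homD by blast
qed

lemma precover_factor:
  assumes U: "U \<subseteq> Ob T" and r: "is_precover T U P A r" and Q: "Q \<in> U"
    and j: "j \<in> H P Q" and q: "q \<in> H Q A" and rq: "r = cm q j"
  shows "is_precover T U Q A q"
  unfolding is_precover_def
proof (intro conjI ballI)
  show "Q \<in> U" "q \<in> Hom T Q A" using Q q homD by auto
  fix Y f assume Y: "Y \<in> U" "f \<in> Hom T Y A"
  then obtain h where h: "h \<in> Hom T Y P" "f = cm r h" using r unfolding is_precover_def by blast
  have hH: "h \<in> H Y P" using h U Y homD j H_iff by blast
  have "f = cm q (cm j h)" using h rq comp_assoc[OF hH j q] by simp
  thus "\<exists>h\<in>Hom T Y Q. f = cm q h" using comp_hom[OF hH j] homD by blast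
qed

lemma preenvelope_factor:
  assumes V: "V \<subseteq> Ob T" and j: "is_preenvelope T V A R j" and Q: "Q \<in> V"
    and j': "j' \<in> H A Q" and a: "a \<in> H Q R" and ja: "j = cm a j'"
  shows "is_preenvelope T V A Q j'"
  unfolding is_preenvelope_def
proof (intro conjI ballI)
  show "Q \<in> V" "j' \<in> Hom T A Q" using Q j' homD by auto
  fix Y f assume Y: "Y \<in> V" "f \<in> Hom T A Y"
  then obtain h where h: "h \<in> Hom T R Y" "f = cm h j" using j unfolding is_preenvelope_def by blast
  have hH: "h \<in> H R Y" using h V Y homD a H_iff by blast
  have "f = cm (cm h a) j'" using h ja comp_assoc[OF j' a hH] by simp
  thus "\<exists>h\<in>Hom T Q Y. f = cm h j'" using comp_hom[OF a hH] homD by blast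
qed

end

section \<open>Two torsion pairs\<close>

locale two_torsion_pairs = triangulated_category T for T :: "('o,'m) tcat" +
  fixes N U V X :: "'o set"
  assumes N: "triangulated_subcat T N"
    and U: "additive_subcat T U" and V: "additive_subcat T V"
    and tpU: "torsion_pair T U (rperp T U)"
    and tpV: "torsion_pair T (lperp T V) V"
    and X_def: "X = U \<inter> V \<inter> N"
    and X_summands: "closed_summands T X"
    and shift_down_rperp: "shift_down T (rperp T U) \<subseteq> V \<inter> N"
    and shift_up_lperp: "shift_up T (lperp T V) \<subseteq> U \<inter> N"
begin

abbreviation "RU \<equiv> rperp T U"
abbreviation "LV \<equiv> lperp T V"

lemmas U_Ob = additive_subcatD(1)[OF U] and V_Ob = additive_subcatD(1)[OF V]
lemmas U_biprod = additive_subcatD(2)[OF U] and V_biprod = additive_subcatD(2)[OF V]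

lemma N_additive: "additive_subcat T N"
  using N unfolding triangulated_subcat_def by blast

lemmas N_biprod = additive_subcatD(2)[OF N_additive]
lemmas N_third = triangulated_subcat_third[OF N]
  and N_first = triangulated_subcat_first[OF N]
  and N_second = triangulated_subcat_second[OF N]

lemma N_iso: "A \<in> N \<Longrightarrow> is_iso T A B f \<Longrightarrow> B \<in> N"
  using N_additive unfolding additive_subcat_def iso_closed_def by blast

lemma X_Ob: "X \<subseteq> Ob T" using X_def U_Ob by blast

lemma X_biprod: "biprod_closed X"
proof (unfold biprod_closed_def, intro ballI allI impI)
  fix A B P i1 i2 p1 p2 assume a: "A \<in> X" "B \<in> X" "is_biprod T A B P i1 i2 p1 p2"
  thus "P \<in> X" using X_def biprod_closedD[OF U_biprod _ _ a(3)] biprod_closedD[OF V_biprod _ _ a(3)]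
      biprod_closedD[OF N_biprod _ _ a(3)] by blast
qed

lemma biprod_UN_in_V_in_X:
  "is_biprod T A B P i1 i2 p1 p2 \<Longrightarrow> A \<in> U \<inter> N \<Longrightarrow> B \<in> U \<inter> N \<Longrightarrow> P \<in> V \<Longrightarrow> P \<in> X"
  using biprod_closedD[OF U_biprod] biprod_closedD[OF N_biprod] X_def by blast

lemma biprod_VN_in_U_in_X:
  "is_biprod T A B P i1 i2 p1 p2 \<Longrightarrow> A \<in> V \<inter> N \<Longrightarrow> B \<in> V \<inter> N \<Longrightarrow> P \<in> U \<Longrightarrow> P \<in> X"
  using biprod_closedD[OF V_biprod] biprod_closedD[OF N_biprod] X_def by blast

lemma summand_in_X: "is_biprod T A B P i1 i2 p1 p2 \<Longrightarrow> P \<in> X \<Longrightarrow> A \<in> X"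
  using X_summands unfolding closed_summands_def by blast

lemma rperp_Ob: "R \<in> RU \<Longrightarrow> R \<in> Ob T" unfolding rperp_def by auto
lemma lperp_Ob: "L \<in> LV \<Longrightarrow> L \<in> Ob T" unfolding lperp_def by auto

lemma U_approximation:
  assumes "A \<in> Ob T" obtains P R c d e where "P \<in> U" "R \<in> RU" "(P, A, R, c, d, e) \<in> Tr"
  using tpU assms unfolding torsion_pair_def by blast

lemma V_approximation:
  assumes "A \<in> Ob T" obtains L Q c d e where "L \<in> LV" "Q \<in> V" "(L, A, Q, c, d, e) \<in> Tr"
  using tpV assms unfolding torsion_pair_def by blast

lemma rperp_desuspension:
  assumes R: "R \<in> RU" obtains R0 e where "R0 \<in> Ob T" "is_iso T (sO R0) R e" "R0 \<in> V" "R0 \<in> N"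
proof -
  obtain R0 e where R0: "R0 \<in> Ob T" "is_iso T (sO R0) R e"
    using shift_ess_surj rperp_Ob[OF R] by blast
  hence "R0 \<in> shift_down T RU" unfolding shift_down_def using R rperp_Ob by blast
  thus ?thesis using that R0 shift_down_rperp by blast
qed

lemma lperp_suspension: assumes L: "L \<in> LV" shows "sO L \<in> U" "sO L \<in> N"
proof -
  have "L \<in> Ob T" using lperp_Ob L by blast
  hence "sO L \<in> shift_up T LV" unfolding shift_up_def using L id_iso shift_ob by blast
  thus "sO L \<in> U" "sO L \<in> N" using shift_up_lperp by blast+
qed

lemma rperp_N: assumes R: "R \<in> RU" shows "R \<in> N"
proof -
  obtain R0 e where "R0 \<in> Ob T" "is_iso T (sO R0) R e" "R0 \<in> N" using rperp_desuspension R by blast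
  thus ?thesis using triangulated_subcat_shift_iff[OF N] N_iso by blast
qed

lemma lperp_N: "L \<in> LV \<Longrightarrow> L \<in> N"
  using lperp_suspension triangulated_subcat_shift_iff[OF N] lperp_Ob by blast

lemma U_lift:
  "(P, A, R, c, d, e) \<in> Tr \<Longrightarrow> R \<in> RU \<Longrightarrow> Y \<in> U \<Longrightarrow> \<phi> \<in> H Y A \<Longrightarrow> \<exists>h\<in>H Y P. \<phi> = cm c h"
  using cov_exact_B rperp_zero comp_hom triangleD(2) by metis

lemma V_extend:
  "(L, A, R, l, j, k) \<in> Tr \<Longrightarrow> L \<in> LV \<Longrightarrow> Y \<in> V \<Longrightarrow> \<phi> \<in> H A Y \<Longrightarrow> \<exists>h\<in>H R Y. \<phi> = cm h j"
  using contra_exact_B lperp_zero comp_hom triangleD(1) by metis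

text \<open>l[1] lifts to L[1] \<rightarrow> R, which vanishes because L[1] \<in> U.\<close>
lemma lperp_map_to_U_part_zero:
  assumes t: "(P, W, R, a, b, c) \<in> Tr" and R: "R \<in> RU" and L: "L \<in> LV"
    and l: "l \<in> H L P" and al: "cm a l = zr L W"
  shows "l = zr L P"
proof -
  obtain u where u: "u \<in> H (sO L) R" "sM l = cm c u" using cov_exact_A[OF t l al] by blast
  have "u = zr (sO L) R" using rperp_zero[OF lperp_suspension(1)[OF L] R u(1)] .
  hence "sM l = zr (sO L) (sO P)"
    using u comp_zero_right[OF triangleD(3)[OF t] shift_ob[OF lperp_Ob[OF L]]] by simp
  thus ?thesis using shift_reflects_zero l by blast
qed

lemma rperp_map_from_V_part_zero:
  assumes t: "(L, G, Q, l, j, k) \<in> Tr" and L: "L \<in> LV" and R: "R \<in> RU"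
    and b: "b \<in> H Q R" and bj: "cm b j = zr G R"
  shows "b = zr Q R"
proof -
  obtain u where u: "u \<in> H (sO L) R" "b = cm u k" using contra_exact_C[OF t b bj] by blast
  have "u = zr (sO L) R" using rperp_zero[OF lperp_suspension(1)[OF L] R u(1)] .
  thus ?thesis using u comp_zero_left[OF triangleD(3)[OF t] rperp_Ob[OF R]] by simp
qed

text \<open>With P \<rightarrow> W \<rightarrow> R the U-approximation of W, P lies in N and its V-approximation
  splits as P \<oplus> L[1] \<in> X; every map from U to W lifts to P and hence factors through it.\<close>
lemma factors_through_X_to_VN:
  assumes W: "W \<in> V" "W \<in> N" and Y: "Y \<in> U" and f: "f \<in> H Y W"
  shows "factors_through T X Y W f"
proof -
  obtain P R a b c where 1: "P \<in> U" "R \<in> RU" "(P, W, R, a, b, c) \<in> Tr"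
    using U_approximation V_Ob W by blast
  have PN: "P \<in> N" using N_first[OF 1(3) W(2) rperp_N[OF 1(2)]] .
  obtain L Q l j k where 2: "L \<in> LV" "Q \<in> V" "(L, P, Q, l, j, k) \<in> Tr"
    using V_approximation triangleD(4)[OF 1(3)] by blast
  have aH: "a \<in> H P W" and jH: "j \<in> H P Q" and lH: "l \<in> H L P" using triangleD 1 2 by auto
  have "l = zr L P"
    using lperp_map_to_U_part_zero[OF 1(3) 1(2) 2(1) lH] lperp_zero[OF 2(1) W(1) comp_hom[OF lH aH]] by blast
  then obtain i2 p where bp: "is_biprod T P (sO L) Q j i2 p k" using triangle_split_first[OF 2(3)] by blast
  have QX: "Q \<in> X" using biprod_UN_in_V_in_X[OF bp] 1(1) PN lperp_suspension[OF 2(1)] 2(2) by blast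
  note bd = biprodD[OF bp]
  obtain h where h: "h \<in> H Y P" "f = cm a h" using U_lift[OF 1(3) 1(2) Y f] by blast
  have "f = cm (cm a p) (cm j h)"
    using h bd(5) comp_id_left[OF h(1)] comp_assoc[OF h(1) jH bd(3)]
      comp_assoc[OF comp_hom[OF h(1) jH] bd(3) aH] by simp
  thus ?thesis using factors_throughI[OF QX comp_hom[OF h(1) jH] comp_hom[OF bd(3) aH]] by simp
qed

lemma factors_through_X_from_UN:
  assumes G: "G \<in> U" "G \<in> N" and Y: "Y \<in> V" and f: "f \<in> H G Y"
  shows "factors_through T X G Y f"
proof -
  obtain L Q l j k where 1: "L \<in> LV" "Q \<in> V" "(L, G, Q, l, j, k) \<in> Tr"
    using V_approximation U_Ob G by blast
  have QN: "Q \<in> N" using N_third[OF 1(3) lperp_N[OF 1(1)] G(2)] .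
  obtain P R a b c where 2: "P \<in> U" "R \<in> RU" "(P, Q, R, a, b, c) \<in> Tr"
    using U_approximation triangleD(6)[OF 1(3)] by blast
  have jH: "j \<in> H G Q" and bH: "b \<in> H Q R" and aH: "a \<in> H P Q" using triangleD 1 2 by auto
  have b0: "b = zr Q R"
    using rperp_map_from_V_part_zero[OF 1(3) 1(1) 2(2) bH] rperp_zero[OF G(1) 2(2) comp_hom[OF jH bH]]
    by simp
  obtain R0 e where R0: "R0 \<in> Ob T" "is_iso T (sO R0) R e" "R0 \<in> V" "R0 \<in> N"
    using rperp_desuspension[OF 2(2)] by blast
  obtain f0 i2 p where bp: "is_biprod T R0 Q P f0 i2 p a"
    using triangle_split_middle[OF 2(3) b0 R0(1,2)] by blast
  have PX: "P \<in> X" using biprod_VN_in_U_in_X[OF bp] R0(3,4) 1(2) QN 2(1) by simp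
  note bd = biprodD[OF bp]
  obtain h where h: "h \<in> H Q Y" "f = cm h j" using V_extend[OF 1(3) 1(1) Y f] by blast
  have "f = cm (cm h a) (cm i2 j)"
    using h bd(6) comp_id_left[OF jH] comp_assoc[OF jH bd(2) aH]
      comp_assoc[OF comp_hom[OF jH bd(2)] aH h(1)] by simp
  thus ?thesis using factors_throughI[OF PX comp_hom[OF jH bd(2)] comp_hom[OF aH h(1)]] by simp
qed

lemma U_N_summand_of_V_in_X:
  assumes G: "G \<in> U" "G \<in> N" and bp: "is_biprod T A G P i1 i2 p1 p2" and P: "P \<in> V"
  shows "G \<in> X"
proof -
  note bd = biprodD[OF bp]
  obtain L Q l j k where 1: "L \<in> LV" "Q \<in> V" "(L, G, Q, l, j, k) \<in> Tr"
    using V_approximation U_Ob G by blast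
  have lH: "l \<in> H L G" using triangleD 1 by auto
  have "cm i2 l = zr L P" using lperp_zero[OF 1(1) P comp_hom[OF lH bd(2)]] .
  hence "l = zr L G"
    using bd(6) comp_id_left[OF lH] comp_assoc[OF lH bd(2) bd(4)]
      comp_zero_right[OF bd(4) lperp_Ob[OF 1(1)]] by simp
  then obtain i p where bp': "is_biprod T G (sO L) Q j i p k" using triangle_split_first[OF 1(3)] by blast
  have "Q \<in> X" using biprod_UN_in_V_in_X[OF bp'] G lperp_suspension[OF 1(1)] 1(2) by blast
  thus ?thesis using summand_in_X[OF bp'] by blast
qed

lemma V_N_summand_of_U_in_X:
  assumes G: "G \<in> V" "G \<in> N" and bp: "is_biprod T G B P i1 i2 p1 p2" and P: "P \<in> U"
  shows "G \<in> X"
proof -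
  note bd = biprodD[OF bp]
  obtain Q R a b c where 1: "Q \<in> U" "R \<in> RU" "(Q, G, R, a, b, c) \<in> Tr"
    using U_approximation V_Ob G by blast
  have bH: "b \<in> H G R" using triangleD 1 by auto
  have "cm b p1 = zr P R" using rperp_zero[OF P 1(2) comp_hom[OF bd(3) bH]] .
  hence "b = zr G R"
    using bd(5) comp_id_right[OF bH] comp_assoc[OF bd(1) bd(3) bH]
      comp_zero_left[OF bd(1) rperp_Ob[OF 1(2)]] by simp
  moreover obtain R0 e where R0: "R0 \<in> Ob T" "is_iso T (sO R0) R e" "R0 \<in> V" "R0 \<in> N"
    using rperp_desuspension[OF 1(2)] by blast
  ultimately obtain f0 i p where bp': "is_biprod T R0 G Q f0 i p a"
    using triangle_split_middle[OF 1(3) _ R0(1,2)] by blast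
  have "Q \<in> X" using biprod_VN_in_U_in_X[OF bp'] R0(3,4) G 1(1) by simp
  thus ?thesis using summand_in_X[OF biprod_swap[OF bp']] by blast
qed

text \<open>For A \<in> V the U-precover is improved from U_A to the middle term Q = U_A \<oplus> L[1] of
  the V-approximation of U_A; the octahedral axiom identifies the new cocone.\<close>
lemma U_precover_triangle_of_V:
  assumes t: "(P, A, R, r, g, h) \<in> Tr" and P: "P \<in> U" and R: "R \<in> RU" and A: "A \<in> V"
    and W0: "W0 \<in> Ob T" "is_iso T (sO W0) R e0" "W0 \<in> V" "W0 \<in> N"
  shows "\<exists>Q W q s t. (W, Q, A, s, q, t) \<in> Tr \<and> is_precover T U Q A q \<and> W \<in> V \<and> W \<in> N
      \<and> Q \<in> U \<and> Q \<in> V"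
proof -
  have rH: "r \<in> H P A" using triangleD t by auto
  obtain L Q l j k where 2: "L \<in> LV" "Q \<in> V" "(L, P, Q, l, j, k) \<in> Tr"
    using V_approximation triangleD(4)[OF t] by blast
  have lH: "l \<in> H L P" and jH: "j \<in> H P Q" using triangleD 2 by auto
  have "l = zr L P"
    using lperp_map_to_U_part_zero[OF t R 2(1) lH] lperp_zero[OF 2(1) A comp_hom[OF lH rH]] by simp
  then obtain i2 p where bp: "is_biprod T P (sO L) Q j i2 p k" using triangle_split_first[OF 2(3)] by blast
  have QU: "Q \<in> U" using biprod_closedD[OF U_biprod P lperp_suspension(1)[OF 2(1)] bp] .
  have SLX: "sO L \<in> X" using U_N_summand_of_V_in_X[OF lperp_suspension[OF 2(1)] bp 2(2)] .
  obtain q where q: "q \<in> H Q A" "r = cm q j" using V_extend[OF 2(3) 2(1) A rH] by blast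
  have pre: "is_precover T U Q A q"
    using precover_factor[OF U_Ob precover_of_triangle[OF U_Ob t P R] QU jH q] .
  obtain C v v' where 3: "(Q, A, C, q, v, v') \<in> Tr" using triangle_exists[OF q(1)] by blast
  obtain x y where 4: "(sO L, R, C, x, y, cm (sM k) v') \<in> Tr"
    using octahedral[OF rotate[OF 2(3)] 3] t q(2) by blast
  have "x = zr (sO L) R" using rperp_zero[OF lperp_suspension(1)[OF 2(1)] R] triangleD(1)[OF 4] by blast
  moreover obtain W e where W: "W \<in> Ob T" "is_iso T (sO W) C e" using shift_ess_surj triangleD(6)[OF 3] by blast
  ultimately obtain g0 i p' h0 where "is_biprod T W0 (sO L) W g0 i p' h0"
    using shifted_triangle_split_first[OF _ lperp_Ob[OF 2(1)] W0(1,2) W] 4 by blast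
  hence "W \<in> V" "W \<in> N"
    using biprod_closedD[OF V_biprod] biprod_closedD[OF N_biprod] W0(3,4) SLX X_def by blast+
  moreover obtain s t' where "(W, Q, A, s, q, t') \<in> Tr" using rotate_back[OF 3 W] by blast
  ultimately show ?thesis using pre QU 2(2) by blast
qed

lemma U_precover_triangle:
  "\<forall>A\<in>Ob T. \<exists>Q W q s t. (W, Q, A, s, q, t) \<in> Tr \<and> is_precover T U Q A q \<and> W \<in> V \<and> W \<in> N
      \<and> (A \<in> V \<longrightarrow> Q \<in> U \<and> Q \<in> V)" (is "\<forall>A\<in>Ob T. ?P A")
proof
  fix A assume A: "A \<in> Ob T"
  obtain P R r g h where 1: "P \<in> U" "R \<in> RU" "(P, A, R, r, g, h) \<in> Tr"
    using U_approximation A by blast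
  obtain W0 e0 where W0: "W0 \<in> Ob T" "is_iso T (sO W0) R e0" "W0 \<in> V" "W0 \<in> N"
    using rperp_desuspension[OF 1(2)] by blast
  show "?P A"
  proof (cases "A \<in> V")
    case False
    obtain s t where "(W0, P, A, s, r, t) \<in> Tr" using rotate_back[OF 1(3) W0(1,2)] by blast
    thus ?thesis using precover_of_triangle[OF U_Ob 1(3) 1(1,2)] W0 False by blast
  next
    case True
    thus ?thesis using U_precover_triangle_of_V[OF 1(3) 1(1,2) True W0] by blast
  qed
qed

lemma V_preenvelope_triangle_of_U:
  assumes t: "(L, A, Q, l, j, k) \<in> Tr" and L: "L \<in> LV" and Q: "Q \<in> V" and A: "A \<in> U"
  shows "\<exists>P W j' p q. (A, P, W, j', p, q) \<in> Tr \<and> is_preenvelope T V A P j' \<and> W \<in> U \<and> W \<in> N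
      \<and> P \<in> U \<and> P \<in> V"
proof -
  have jH: "j \<in> H A Q" using triangleD t by auto
  obtain P R a b c where 2: "P \<in> U" "R \<in> RU" "(P, Q, R, a, b, c) \<in> Tr"
    using U_approximation triangleD(6)[OF t] by blast
  have bH: "b \<in> H Q R" and aH: "a \<in> H P Q" using triangleD 2 by auto
  have b0: "b = zr Q R"
    using rperp_map_from_V_part_zero[OF t L 2(2) bH] rperp_zero[OF A 2(2) comp_hom[OF jH bH]] by simp
  obtain R0 e where R0: "R0 \<in> Ob T" "is_iso T (sO R0) R e" "R0 \<in> V" "R0 \<in> N"
    using rperp_desuspension[OF 2(2)] by blast
  obtain f0 i2 p where bp: "is_biprod T R0 Q P f0 i2 p a"
    using triangle_split_middle[OF 2(3) b0 R0(1,2)] by blast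
  have PV: "P \<in> V" using biprod_closedD[OF V_biprod R0(3) Q bp] .
  have R0X: "R0 \<in> X" using V_N_summand_of_U_in_X[OF R0(3,4) bp 2(1)] .
  obtain j' where j': "j' \<in> H A P" "j = cm a j'" using U_lift[OF 2(3) 2(2) A jH] by blast
  have pre: "is_preenvelope T V A P j'"
    using preenvelope_factor[OF V_Ob preenvelope_of_triangle[OF V_Ob t L Q] PV j'(1) aH j'(2)] .
  obtain C u u' where 3: "(A, P, C, j', u, u') \<in> Tr" using triangle_exists[OF j'(1)] by blast
  obtain x y where 4: "(C, sO L, R, x, y, cm (sM u) c) \<in> Tr"
    using octahedral[OF 3 2(3)] rotate[OF t] j'(2) by blast
  have "y = zr (sO L) R" using rperp_zero[OF lperp_suspension(1)[OF L] 2(2)] triangleD(2)[OF 4] by blast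
  then obtain f1 i3 p3 where "is_biprod T R0 (sO L) C f1 i3 p3 x"
    using triangle_split_middle[OF 4 _ R0(1,2)] by blast
  hence "C \<in> U" "C \<in> N"
    using biprod_closedD[OF U_biprod] biprod_closedD[OF N_biprod] R0X X_def lperp_suspension[OF L] by blast+
  thus ?thesis using 3 pre 2(1) PV by blast
qed

lemma V_preenvelope_triangle:
  "\<forall>A\<in>Ob T. \<exists>P W j p q. (A, P, W, j, p, q) \<in> Tr \<and> is_preenvelope T V A P j \<and> W \<in> U \<and> W \<in> N
      \<and> (A \<in> U \<longrightarrow> P \<in> U \<and> P \<in> V)" (is "\<forall>A\<in>Ob T. ?P A")
proof
  fix A assume A: "A \<in> Ob T"
  obtain L Q l j k where 1: "L \<in> LV" "Q \<in> V" "(L, A, Q, l, j, k) \<in> Tr"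
    using V_approximation A by blast
  show "?P A"
  proof (cases "A \<in> U")
    case False
    thus ?thesis
      using rotate[OF 1(3)] preenvelope_of_triangle[OF V_Ob 1(3) 1(1,2)] lperp_suspension[OF 1(1)] by blast
  next
    case True
    thus ?thesis using V_preenvelope_triangle_of_U[OF 1(3) 1(1,2) True] by blast
  qed
qed

subsection \<open>The N-localization triple\<close>

text \<open>If r : P \<rightarrow> W is the U-approximation of W \<in> rperpQ X U, then r factors through X, so
  1 - c a kills r for a suitable P \<rightarrow> X0 \<rightarrow> P; the map (1 - c a)[1] lifts to R \<cong> W0[1]
  with W0 \<in> V \<inter> N, so 1 - c a factors through X too and P \<in> X.\<close>
lemma rperpQ_subset_N: "rperpQ T X U (Ob T) \<subseteq> N"
proof
  fix W assume "W \<in> rperpQ T X U (Ob T)"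
  hence W: "W \<in> Ob T" and ftW: "\<And>Y f. Y \<in> U \<Longrightarrow> f \<in> Hom T Y W \<Longrightarrow> factors_through T X Y W f"
    unfolding rperpQ_def by blast+
  obtain P R r g h where 1: "P \<in> U" "R \<in> RU" "(P, W, R, r, g, h) \<in> Tr"
    using U_approximation W by blast
  have rH: "r \<in> H P W" and hH: "h \<in> H R (sO P)" and PO: "P \<in> Ob T" using triangleD 1 by auto
  obtain X0 a b where x0: "X0 \<in> X" "a \<in> H P X0" "b \<in> H X0 W" "r = cm b a"
    using factors_throughE[OF ftW[OF 1(1) homD(3)[OF rH]] X_Ob PO W] by blast
  have X0U: "X0 \<in> U" using x0(1) X_def by blast
  obtain c where c: "c \<in> H X0 P" "b = cm r c" using U_lift[OF 1(3) 1(2) X0U x0(3)] by blast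
  have ca: "cm c a \<in> H P P" using comp_hom[OF x0(2) c(1)] .
  define d where "d = ad (idt P) (ng (cm c a))"
  have dH: "d \<in> H P P" using d_def add_hom id_hom[OF PO] neg_hom ca by blast
  have "cm r (cm c a) = r" using comp_assoc[OF x0(2) c(1) rH] c(2)[symmetric] x0(4)[symmetric] by simp
  hence "cm r d = zr P W" using d_def comp_id_minus_right[OF rH ca] by simp
  then obtain v where v: "v \<in> H (sO P) R" "sM d = cm h v" using cov_exact_A[OF 1(3) dH] by blast
  obtain W0 e0 where W0: "W0 \<in> Ob T" "is_iso T (sO W0) R e0" "W0 \<in> V" "W0 \<in> N"
    using rperp_desuspension[OF 1(2)] by blast
  have SO: "sO W0 \<in> Ob T" using shift_ob W0 by blast
  have e0H: "e0 \<in> H (sO W0) R" using iso_hom W0 SO rperp_Ob[OF 1(2)] by blast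
  obtain e0' where e0': "e0' \<in> H R (sO W0)" "cm e0 e0' = idt R"
    using iso_inverse[OF W0(2) SO rperp_Ob[OF 1(2)]] by metis
  obtain n where n: "n \<in> H P W0" "sM n = cm e0' v"
    using shift_surj[OF comp_hom[OF v(1) e0'(1)] PO W0(1)] by blast
  have "sM d = cm h (cm (cm e0 e0') v)" using v(2) e0'(2) comp_id_left[OF v(1)] by simp
  also have "\<dots> = cm (cm h e0) (sM n)"
    using n(2) comp_assoc[OF v(1) e0'(1) e0H] comp_assoc[OF comp_hom[OF v(1) e0'(1)] e0H hH] by simp
  finally have "sM d = cm (cm h e0) (sM n)" .
  hence "factors_through T X P P d"
    by (rule shift_factors_through[OF dH n(1) factors_through_X_to_VN[OF W0(3,4) 1(1) n(1)] X_Ob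
        comp_hom[OF e0H hH]])
  hence "P \<in> X"
    unfolding d_def by (rule in_class_if_complement_factors[OF X_Ob X_biprod X_summands x0(1,2) c(1)])
  hence "P \<in> N" using X_def by blast
  thus "W \<in> N" using N_second[OF 1(3) _ rperp_N[OF 1(2)]] by blast
qed

lemma lperpQ_subset_N: "lperpQ T X V (Ob T) \<subseteq> N"
proof
  fix W assume "W \<in> lperpQ T X V (Ob T)"
  hence W: "W \<in> Ob T" and ftW: "\<And>Y f. Y \<in> V \<Longrightarrow> f \<in> Hom T W Y \<Longrightarrow> factors_through T X W Y f"
    unfolding lperpQ_def by blast+
  obtain L Q l j k where 1: "L \<in> LV" "Q \<in> V" "(L, W, Q, l, j, k) \<in> Tr"
    using V_approximation W by blast
  have jH: "j \<in> H W Q" and kH: "k \<in> H Q (sO L)" and QO: "Q \<in> Ob T" using triangleD 1 by auto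
  obtain X0 a b where x0: "X0 \<in> X" "a \<in> H W X0" "b \<in> H X0 Q" "j = cm b a"
    using factors_throughE[OF ftW[OF 1(2) homD(3)[OF jH]] X_Ob W QO] by blast
  have X0V: "X0 \<in> V" using x0(1) X_def by blast
  obtain c where c: "c \<in> H Q X0" "a = cm c j" using V_extend[OF 1(3) 1(1) X0V x0(2)] by blast
  have bc: "cm b c \<in> H Q Q" using comp_hom[OF c(1) x0(3)] .
  define d where "d = ad (idt Q) (ng (cm b c))"
  have dH: "d \<in> H Q Q" using d_def add_hom id_hom[OF QO] neg_hom bc by blast
  have "cm (cm b c) j = j" using comp_assoc[OF jH c(1) x0(3)] c(2)[symmetric] x0(4)[symmetric] by simp
  hence "cm d j = zr W Q" using d_def comp_id_minus_left[OF jH bc] by simp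
  then obtain \<mu> where mu: "\<mu> \<in> H (sO L) Q" "d = cm \<mu> k" using contra_exact_C[OF 1(3) dH] by blast
  have "factors_through T X (sO L) Q \<mu>"
    using factors_through_X_from_UN[OF lperp_suspension[OF 1(1)] 1(2) mu(1)] .
  hence "factors_through T X Q Q (ad (idt Q) (ng (cm b c)))"
    using factors_through_comp_right[OF _ kH X_Ob QO] mu(2) d_def by simp
  hence "Q \<in> X" by (rule in_class_if_complement_factors[OF X_Ob X_biprod X_summands x0(1) c(1) x0(3)])
  hence "Q \<in> N" using X_def by blast
  thus "W \<in> N" using N_second[OF 1(3) lperp_N[OF 1(1)]] by blast
qed

lemma V_N_in_rperpQ:
  assumes "W \<in> V" "W \<in> N" "U' \<subseteq> U" "W \<in> Amb" shows "W \<in> rperpQ T X U' Amb"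
  unfolding rperpQ_def
proof (intro CollectI conjI ballI)
  fix Y f assume "Y \<in> U'" "f \<in> Hom T Y W"
  thus "factors_through T X Y W f"
    using factors_through_X_to_VN[OF assms(1,2)] assms(3) U_Ob V_Ob assms(1) H_iff by blast
qed fact

lemma U_N_in_lperpQ:
  assumes "W \<in> U" "W \<in> N" "V' \<subseteq> V" "W \<in> Amb" shows "W \<in> lperpQ T X V' Amb"
  unfolding lperpQ_def
proof (intro CollectI conjI ballI)
  fix Y f assume "Y \<in> V'" "f \<in> Hom T W Y"
  thus "factors_through T X W Y f"
    using factors_through_X_from_UN[OF assms(1,2)] assms(3) U_Ob V_Ob assms(1) H_iff by blast
qed fact

lemma N_localization_triple: "N_localization_triple T N U X V"
proof -
  obtain Q W r s t where QW: "\<forall>A\<in>Ob T. (W A, Q A, A, s A, r A, t A) \<in> Tr \<and>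
      is_precover T U (Q A) A (r A) \<and> W A \<in> V \<and> W A \<in> N \<and> (A \<in> V \<longrightarrow> Q A \<in> U \<and> Q A \<in> V)"
    using bchoice5[OF U_precover_triangle] by blast
  obtain R W' j p q where RW: "\<forall>A\<in>Ob T. (A, R A, W' A, j A, p A, q A) \<in> Tr \<and>
      is_preenvelope T V A (R A) (j A) \<and> W' A \<in> U \<and> W' A \<in> N \<and> (A \<in> U \<longrightarrow> R A \<in> U \<and> R A \<in> V)"
    using bchoice5[OF V_preenvelope_triangle] by blast
  have "\<forall>A\<in>Ob T.
      (W A, Q A, A, s A, r A, t A) \<in> Tr \<and> is_precover T U (Q A) A (r A) \<and>
      W A \<in> rperpQ T X U (Ob T) \<and>
      (A, R A, W' A, j A, p A, q A) \<in> Tr \<and> is_preenvelope T V A (R A) (j A) \<and>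
      W' A \<in> lperpQ T X V (Ob T) \<and>
      (A \<in> V \<longrightarrow> Q A \<in> U \<inter> V \<and> W A \<in> rperpQ T X (U \<inter> V) V) \<and>
      (A \<in> U \<longrightarrow> R A \<in> U \<inter> V \<and> W' A \<in> lperpQ T X (U \<inter> V) U)" (is "\<forall>A\<in>Ob T. ?P A")
  proof
    fix A assume A: "A \<in> Ob T"
    note QWA = QW[rule_format, OF A] and RWA = RW[rule_format, OF A]
    have WO: "W A \<in> Ob T" using triangleD(4) QWA by blast
    have W'O: "W' A \<in> Ob T" using triangleD(6) RWA by blast
    show "?P A"
      using QWA RWA V_N_in_rperpQ[of "W A"] U_N_in_lperpQ[of "W' A"] WO W'O by simp
  qed
  moreover have "X \<subseteq> U \<inter> V" using X_def by blast
  ultimately have "localization_triple T (Ob T) U X V"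
    unfolding localization_triple_def using U_Ob V_Ob by blast
  thus ?thesis
    unfolding N_localization_triple_def using X_def rperpQ_subset_N lperpQ_subset_N by (intro conjI)
qed

subsection \<open>The Verdier condition\<close>

text \<open>Throughout, A \<rightarrow> B \<rightarrow> M \<rightarrow> A[1] is a triangle whose connecting map h kills the
  U-approximation r : P \<rightarrow> M of M, so that r = g t for some t : P \<rightarrow> B.\<close>
context
  fixes A B M s g h P R r b c t
  assumes tA: "(A, B, M, s, g, h) \<in> Tr"
    and tM: "(P, M, R, r, b, c) \<in> Tr" and R: "R \<in> RU" and hr: "cm h r = zr P (sO A)"
    and t: "t \<in> H P B" "r = cm g t"
begin

lemma kernel_factors_through_X:
  assumes Y: "Y \<in> U" and \<psi>: "\<psi> \<in> H Y A" and s\<psi>: "cm s \<psi> = zr Y B"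
  shows "factors_through T X Y A \<psi>"
proof -
  have hH: "h \<in> H M (sO A)" and bH: "b \<in> H M R" and YO: "Y \<in> Ob T" using triangleD tA tM homD \<psi> by auto
  obtain w where w: "w \<in> H (sO Y) M" "sM \<psi> = cm h w" using cov_exact_A[OF tA \<psi> s\<psi>] by blast
  obtain \<eta> where \<eta>: "\<eta> \<in> H R (sO A)" "h = cm \<eta> b" using contra_exact_B[OF tM hH hr] by blast
  obtain R0 e where R0: "R0 \<in> Ob T" "is_iso T (sO R0) R e" "R0 \<in> V" "R0 \<in> N"
    using rperp_desuspension[OF R] by blast
  have SO: "sO R0 \<in> Ob T" using shift_ob R0 by blast
  have eH: "e \<in> H (sO R0) R" using iso_hom R0 SO rperp_Ob[OF R] by blast
  obtain e' where e': "e' \<in> H R (sO R0)" "cm e e' = idt R"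
    using iso_inverse[OF R0(2) SO rperp_Ob[OF R]] by metis
  have bw: "cm b w \<in> H (sO Y) R" using comp_hom[OF w(1) bH] .
  obtain \<mu> where \<mu>: "\<mu> \<in> H Y R0" "sM \<mu> = cm e' (cm b w)"
    using shift_surj[OF comp_hom[OF bw e'(1)] YO R0(1)] by blast
  have "sM \<psi> = cm \<eta> (cm (cm e e') (cm b w))"
    using w(2) \<eta>(2) comp_assoc[OF w(1) bH \<eta>(1)] e'(2) comp_id_left[OF bw] by simp
  also have "\<dots> = cm (cm \<eta> e) (sM \<mu>)"
    using \<mu>(2) comp_assoc[OF bw e'(1) eH] comp_assoc[OF comp_hom[OF bw e'(1)] eH \<eta>(1)] by simp
  finally show ?thesis
    using shift_factors_through[OF \<psi> \<mu>(1) factors_through_X_to_VN[OF R0(3,4) Y \<mu>(1)] X_Ob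
        comp_hom[OF eH \<eta>(1)]] by blast
qed

lemma lift_factors_through_X:
  assumes Y: "Y \<in> U" and \<mu>: "\<mu> \<in> H Y P" and r\<mu>: "cm r \<mu> = zr Y M"
  shows "\<exists>\<phi>\<in>H Y A. cm t \<mu> = cm s \<phi> \<and> factors_through T X Y A \<phi>"
proof -
  have sH: "s \<in> H A B" and gH: "g \<in> H B M" and AO: "A \<in> Ob T" and YO: "Y \<in> Ob T"
    using triangleD tA homD \<mu> by auto
  obtain R0 e where R0: "R0 \<in> Ob T" "is_iso T (sO R0) R e" "R0 \<in> V" "R0 \<in> N"
    using rperp_desuspension[OF R] by blast
  obtain \<rho> \<tau> where \<rho>: "\<rho> \<in> H R0 P" "(R0, P, M, \<rho>, r, \<tau>) \<in> Tr"
    using rotate_back[OF tM R0(1,2)] by blast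
  obtain \<nu> where \<nu>: "\<nu> \<in> H Y R0" "\<mu> = cm \<rho> \<nu>" using cov_exact_B[OF \<rho>(2) \<mu> r\<mu>] by blast
  have "cm g (cm t \<rho>) = zr R0 M"
    using comp_assoc[OF \<rho>(1) t(1) gH] t(2) triangle_comp_zero[OF \<rho>(2)] by simp
  then obtain \<kappa> where \<kappa>: "\<kappa> \<in> H R0 A" "cm t \<rho> = cm s \<kappa>"
    using cov_exact_B[OF tA comp_hom[OF \<rho>(1) t(1)]] by blast
  have "cm t \<mu> = cm s (cm \<kappa> \<nu>)"
    using \<nu>(2) comp_assoc[OF \<nu>(1) \<rho>(1) t(1)] \<kappa>(2) comp_assoc[OF \<nu>(1) \<kappa>(1) sH] by simp
  moreover have "factors_through T X Y A (cm \<kappa> \<nu>)"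
    using factors_through_comp_left[OF factors_through_X_to_VN[OF R0(3,4) Y \<nu>(1)] \<kappa>(1) X_Ob YO] .
  ultimately show ?thesis using comp_hom[OF \<nu>(1) \<kappa>(1)] by blast
qed

text \<open>Writing s \<psi> = \<beta> \<alpha> through X3, the map \<beta> - t \<gamma> factors as s \<delta>, and \<delta> \<alpha> is the
  X-part split off from \<psi>.\<close>
lemma monic_reduction:
  assumes Y: "Y \<in> U" and \<psi>: "\<psi> \<in> H Y A" and s\<psi>: "factors_through T X Y B (cm s \<psi>)"
  shows "\<exists>\<psi>1\<in>H Y A. \<exists>\<mu>\<in>H Y P. factors_through T X Y A (ad \<psi> (ng \<psi>1)) \<and>
      cm s \<psi>1 = cm t \<mu> \<and> cm r \<mu> = zr Y M"
proof -
  have sH: "s \<in> H A B" and gH: "g \<in> H B M" and rH: "r \<in> H P M" and YO: "Y \<in> Ob T"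
    using triangleD tA tM homD \<psi> by auto
  obtain X3 \<alpha> \<beta> where x: "X3 \<in> X" "\<alpha> \<in> H Y X3" "\<beta> \<in> H X3 B" "cm s \<psi> = cm \<beta> \<alpha>"
    using factors_throughE[OF s\<psi> X_Ob YO triangleD(5)[OF tA]] by blast
  have X3U: "X3 \<in> U" using x(1) X_def by blast
  obtain \<gamma> where \<gamma>: "\<gamma> \<in> H X3 P" "cm g \<beta> = cm r \<gamma>" using U_lift[OF tM R X3U comp_hom[OF x(3) gH]] by blast
  have t\<gamma>: "cm t \<gamma> \<in> H X3 B" using comp_hom[OF \<gamma>(1) t(1)] .
  have "cm g (ad \<beta> (ng (cm t \<gamma>))) = zr X3 M"
    using comp_sub_right[OF x(3) t\<gamma> gH] comp_assoc[OF \<gamma>(1) t(1) gH] t(2) \<gamma>(2)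
      add_neg_right[OF comp_hom[OF \<gamma>(1) rH]] by simp
  then obtain \<delta> where \<delta>: "\<delta> \<in> H X3 A" "ad \<beta> (ng (cm t \<gamma>)) = cm s \<delta>"
    using cov_exact_B[OF tA add_hom[OF x(3) neg_hom[OF t\<gamma>]]] by blast
  have \<delta>\<alpha>: "cm \<delta> \<alpha> \<in> H Y A" using comp_hom[OF x(2) \<delta>(1)] .
  define \<psi>1 where "\<psi>1 = ad \<psi> (ng (cm \<delta> \<alpha>))"
  have \<psi>1H: "\<psi>1 \<in> H Y A" using \<psi>1_def add_hom neg_hom \<psi> \<delta>\<alpha> by blast
  have "ad \<psi> (ng \<psi>1) = cm \<delta> \<alpha>" using \<psi>1_def sub_sub_cancel[OF \<psi> \<delta>\<alpha>] by simp
  hence "factors_through T X Y A (ad \<psi> (ng \<psi>1))" using factors_throughI[OF x(1,2) \<delta>(1)] by simp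
  moreover have "cm s \<psi>1 = ad (cm \<beta> \<alpha>) (ng (ad (cm \<beta> \<alpha>) (ng (cm (cm t \<gamma>) \<alpha>))))"
    using \<psi>1_def comp_sub_right[OF \<psi> \<delta>\<alpha> sH] x(4) comp_assoc[OF x(2) \<delta>(1) sH] \<delta>(2)
      comp_sub_left[OF x(2) x(3) t\<gamma>] by simp
  hence "cm s \<psi>1 = cm t (cm \<gamma> \<alpha>)"
    using sub_sub_cancel comp_hom x(2,3) t\<gamma> comp_assoc[OF x(2) \<gamma>(1) t(1)] by metis
  moreover have "cm r (cm \<gamma> \<alpha>) = cm (cm g s) \<psi>"
    using comp_assoc[OF x(2) \<gamma>(1) rH] \<gamma>(2) comp_assoc[OF x(2) x(3) gH] x(4) comp_assoc[OF \<psi> sH gH]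
    by metis
  hence "cm r (cm \<gamma> \<alpha>) = zr Y M" using triangle_comp_zero[OF tA] comp_zero_left[OF \<psi>] triangleD(6)[OF tA] by simp
  ultimately show ?thesis using \<psi>1H comp_hom[OF x(2) \<gamma>(1)] by blast
qed

lemma monic_modulo_X:
  assumes Y: "Y \<in> U" and \<psi>: "\<psi> \<in> H Y A" and s\<psi>: "factors_through T X Y B (cm s \<psi>)"
  shows "factors_through T X Y A \<psi>"
proof -
  have sH: "s \<in> H A B" and AO: "A \<in> Ob T" and YO: "Y \<in> Ob T" using triangleD tA homD \<psi> by auto
  obtain \<psi>1 \<mu> where \<psi>1: "\<psi>1 \<in> H Y A" "\<mu> \<in> H Y P" "factors_through T X Y A (ad \<psi> (ng \<psi>1))"
      "cm s \<psi>1 = cm t \<mu>" "cm r \<mu> = zr Y M"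
    using monic_reduction[OF Y \<psi> s\<psi>] by blast
  obtain \<phi> where \<phi>: "\<phi> \<in> H Y A" "cm t \<mu> = cm s \<phi>" "factors_through T X Y A \<phi>"
    using lift_factors_through_X[OF Y \<psi>1(2,5)] by blast
  have "cm s (ad \<psi>1 (ng \<phi>)) = zr Y B"
    using comp_sub_right[OF \<psi>1(1) \<phi>(1) sH] \<psi>1(4) \<phi>(2) add_neg_right[OF comp_hom[OF \<phi>(1) sH]] by simp
  hence "factors_through T X Y A (ad \<psi>1 (ng \<phi>))"
    using kernel_factors_through_X[OF Y add_hom[OF \<psi>1(1) neg_hom[OF \<phi>(1)]]] by blast
  hence "factors_through T X Y A \<psi>1"
    using factors_through_add[OF _ \<phi>(3) X_Ob X_biprod YO AO] sub_add_cancel[OF \<psi>1(1) \<phi>(1)] by metis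
  thus ?thesis
    using factors_through_add[OF _ \<psi>1(3) X_Ob X_biprod YO AO] add_sub_cancel_left[OF \<psi>1(1) \<psi>] by metis
qed

end

text \<open>Dually, M \<rightarrow> A \<rightarrow> B \<rightarrow> M[1] is a triangle such that the V-approximation j : M \<rightarrow> Q of M
  factors as j = t h through h.\<close>
context
  fixes M A B h s g L Q l j k t
  assumes tF: "(M, A, B, h, s, g) \<in> Tr"
    and tV: "(L, M, Q, l, j, k) \<in> Tr" and L: "L \<in> LV" and sj: "cm (sM j) g = zr B (sO Q)"
    and t: "t \<in> H A Q" "j = cm t h"
begin

lemma cokernel_factors_through_X:
  assumes Y: "Y \<in> V" and \<phi>: "\<phi> \<in> H B Y" and \<phi>s: "cm \<phi> s = zr A Y"
  shows "factors_through T X B Y \<phi>"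
proof -
  have gH: "g \<in> H B (sO M)" and jH: "j \<in> H M Q" and lH: "l \<in> H L M" and BO: "B \<in> Ob T"
    using triangleD tF tV by auto
  obtain w where w: "w \<in> H (sO M) Y" "\<phi> = cm w g" using contra_exact_C[OF tF \<phi> \<phi>s] by blast
  have "cm (ng (sM j)) g = zr B (sO Q)"
    using comp_neg_left[OF gH shift_hom[OF jH]] sj neg_zero[OF BO shift_ob[OF triangleD(6)[OF tV]]] by simp
  then obtain \<eta> where \<eta>: "\<eta> \<in> H B (sO L)" "g = cm (ng (sM l)) \<eta>"
    using cov_exact_C[OF rotate[OF rotate[OF tV]] gH] by blast
  have nl: "ng (sM l) \<in> H (sO L) (sO M)" using neg_hom shift_hom lH by blast
  have "\<phi> = cm (cm w (ng (sM l))) \<eta>" using w(2) \<eta>(2) comp_assoc[OF \<eta>(1) nl w(1)] by simp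
  thus ?thesis
    using factors_through_comp_right[OF factors_through_X_from_UN[OF lperp_suspension[OF L] Y
        comp_hom[OF nl w(1)]] \<eta>(1) X_Ob homD(2)[OF \<phi>]] by simp
qed

lemma extend_factors_through_X:
  assumes Y: "Y \<in> V" and \<mu>: "\<mu> \<in> H Q Y" and \<mu>j: "cm \<mu> j = zr M Y"
  shows "\<exists>\<phi>\<in>H B Y. cm \<mu> t = cm \<phi> s \<and> factors_through T X B Y \<phi>"
proof -
  have hH: "h \<in> H M A" and kH: "k \<in> H Q (sO L)" and BO: "B \<in> Ob T" and YO: "Y \<in> Ob T"
    using triangleD tF tV homD \<mu> by auto
  obtain \<nu> where \<nu>: "\<nu> \<in> H (sO L) Y" "\<mu> = cm \<nu> k" using contra_exact_C[OF tV \<mu> \<mu>j] by blast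
  have "cm (cm k t) h = zr M (sO L)"
    using comp_assoc[OF hH t(1) kH] t(2) triangle_comp_zero_second[OF tV] by simp
  then obtain \<kappa> where \<kappa>: "\<kappa> \<in> H B (sO L)" "cm k t = cm \<kappa> s"
    using contra_exact_B[OF tF comp_hom[OF t(1) kH]] by blast
  have sH: "s \<in> H A B" using triangleD tF by auto
  have "cm \<mu> t = cm (cm \<nu> \<kappa>) s"
    using \<nu>(2) comp_assoc[OF t(1) kH \<nu>(1)] \<kappa>(2) comp_assoc[OF sH \<kappa>(1) \<nu>(1)] by simp
  moreover have "factors_through T X B Y (cm \<nu> \<kappa>)"
    using factors_through_comp_right[OF factors_through_X_from_UN[OF lperp_suspension[OF L] Y \<nu>(1)]
        \<kappa>(1) X_Ob YO] .
  ultimately show ?thesis using comp_hom[OF \<kappa>(1) \<nu>(1)] by blast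
qed

lemma epic_reduction:
  assumes Y: "Y \<in> V" and \<phi>: "\<phi> \<in> H B Y" and \<phi>s: "factors_through T X A Y (cm \<phi> s)"
  shows "\<exists>\<phi>1\<in>H B Y. \<exists>\<mu>\<in>H Q Y. factors_through T X B Y (ad \<phi> (ng \<phi>1)) \<and>
      cm \<phi>1 s = cm \<mu> t \<and> cm \<mu> j = zr M Y"
proof -
  have sH: "s \<in> H A B" and hH: "h \<in> H M A" and jH: "j \<in> H M Q" and AO: "A \<in> Ob T" and YO: "Y \<in> Ob T"
    using triangleD tF tV homD \<phi> by auto
  obtain X3 \<alpha> \<beta> where x: "X3 \<in> X" "\<alpha> \<in> H A X3" "\<beta> \<in> H X3 Y" "cm \<phi> s = cm \<beta> \<alpha>"
    using factors_throughE[OF \<phi>s X_Ob AO YO] by blast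
  have X3V: "X3 \<in> V" using x(1) X_def by blast
  obtain \<gamma> where \<gamma>: "\<gamma> \<in> H Q X3" "cm \<alpha> h = cm \<gamma> j" using V_extend[OF tV L X3V comp_hom[OF hH x(2)]] by blast
  have \<gamma>t: "cm \<gamma> t \<in> H A X3" using comp_hom[OF t(1) \<gamma>(1)] .
  have "cm (ad \<alpha> (ng (cm \<gamma> t))) h = zr M X3"
    using comp_sub_left[OF hH x(2) \<gamma>t] comp_assoc[OF hH t(1) \<gamma>(1)] t(2) \<gamma>(2)
      add_neg_right[OF comp_hom[OF jH \<gamma>(1)]] by simp
  then obtain \<delta> where \<delta>: "\<delta> \<in> H B X3" "ad \<alpha> (ng (cm \<gamma> t)) = cm \<delta> s"
    using contra_exact_B[OF tF add_hom[OF x(2) neg_hom[OF \<gamma>t]]] by blast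
  have \<beta>\<delta>: "cm \<beta> \<delta> \<in> H B Y" using comp_hom[OF \<delta>(1) x(3)] .
  define \<phi>1 where "\<phi>1 = ad \<phi> (ng (cm \<beta> \<delta>))"
  have \<phi>1H: "\<phi>1 \<in> H B Y" using \<phi>1_def add_hom neg_hom \<phi> \<beta>\<delta> by blast
  have "ad \<phi> (ng \<phi>1) = cm \<beta> \<delta>" using \<phi>1_def sub_sub_cancel[OF \<phi> \<beta>\<delta>] by simp
  hence "factors_through T X B Y (ad \<phi> (ng \<phi>1))" using factors_throughI[OF x(1) \<delta>(1) x(3)] by simp
  moreover have "cm \<phi>1 s = ad (cm \<beta> \<alpha>) (ng (ad (cm \<beta> \<alpha>) (ng (cm \<beta> (cm \<gamma> t)))))"
    using \<phi>1_def comp_sub_left[OF sH \<phi> \<beta>\<delta>] x(4) comp_assoc[OF sH \<delta>(1) x(3)] \<delta>(2)[symmetric]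
      comp_sub_right[OF x(2) \<gamma>t x(3)] by simp
  hence "cm \<phi>1 s = cm (cm \<beta> \<gamma>) t"
    using sub_sub_cancel comp_hom x(2,3) \<gamma>t comp_assoc[OF t(1) \<gamma>(1) x(3)] by metis
  moreover have "cm (cm \<beta> \<gamma>) j = cm \<phi> (cm s h)"
    using comp_assoc[OF jH \<gamma>(1) x(3)] \<gamma>(2) comp_assoc[OF hH x(2) x(3)] x(4) comp_assoc[OF hH sH \<phi>]
    by metis
  hence "cm (cm \<beta> \<gamma>) j = zr M Y" using triangle_comp_zero[OF tF] comp_zero_right[OF \<phi>] triangleD(4)[OF tF] by simp
  ultimately show ?thesis using \<phi>1H comp_hom[OF \<gamma>(1) x(3)] by blast
qed

lemma epic_modulo_X:
  assumes Y: "Y \<in> V" and \<phi>: "\<phi> \<in> H B Y" and \<phi>s: "factors_through T X A Y (cm \<phi> s)"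
  shows "factors_through T X B Y \<phi>"
proof -
  have sH: "s \<in> H A B" and BO: "B \<in> Ob T" and YO: "Y \<in> Ob T" using triangleD tF homD \<phi> by auto
  obtain \<phi>1 \<mu> where \<phi>1: "\<phi>1 \<in> H B Y" "\<mu> \<in> H Q Y" "factors_through T X B Y (ad \<phi> (ng \<phi>1))"
      "cm \<phi>1 s = cm \<mu> t" "cm \<mu> j = zr M Y"
    using epic_reduction[OF Y \<phi> \<phi>s] by blast
  obtain \<phi>' where \<phi>': "\<phi>' \<in> H B Y" "cm \<mu> t = cm \<phi>' s" "factors_through T X B Y \<phi>'"
    using extend_factors_through_X[OF Y \<phi>1(2,5)] by blast
  have "cm (ad \<phi>1 (ng \<phi>')) s = zr A Y"
    using comp_sub_left[OF sH \<phi>1(1) \<phi>'(1)] \<phi>1(4) \<phi>'(2) add_neg_right[OF comp_hom[OF sH \<phi>'(1)]] by simp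
  hence "factors_through T X B Y (ad \<phi>1 (ng \<phi>'))"
    using cokernel_factors_through_X[OF Y add_hom[OF \<phi>1(1) neg_hom[OF \<phi>'(1)]]] by blast
  hence "factors_through T X B Y \<phi>1"
    using factors_through_add[OF _ \<phi>'(3) X_Ob X_biprod BO YO] sub_add_cancel[OF \<phi>1(1) \<phi>'(1)] by metis
  thus ?thesis
    using factors_through_add[OF _ \<phi>1(3) X_Ob X_biprod BO YO] add_sub_cancel_left[OF \<phi>1(1) \<phi>] by metis
qed

end

lemma map_from_lperp_iso_to_shift_V_zero:
  assumes L: "L \<in> LV" and Z: "Z \<in> V" and e: "is_iso T (sO L) P e" and \<phi>: "\<phi> \<in> H P (sO Z)"
  shows "\<phi> = zr P (sO Z)"
proof -
  have LO: "L \<in> Ob T" and ZO: "Z \<in> Ob T" and PO: "P \<in> Ob T" using lperp_Ob L V_Ob Z homD \<phi> by auto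
  have SO: "sO L \<in> Ob T" using shift_ob LO by blast
  have eH: "e \<in> H (sO L) P" using iso_hom e SO PO by blast
  obtain w where w: "w \<in> H L Z" "sM w = cm \<phi> e" using shift_surj[OF comp_hom[OF eH \<phi>] LO ZO] by blast
  have "cm \<phi> e = zr (sO L) (sO Z)" using w lperp_zero[OF L Z w(1)] shift_zero[OF LO ZO] by simp
  thus ?thesis using iso_cancel_zero_right[OF e SO PO \<phi>] by blast
qed

lemma map_from_U_to_rperp_iso_zero:
  assumes Y: "Y \<in> U" and e: "is_iso T (sO Q) R e" and R: "R \<in> RU" and Q: "Q \<in> Ob T"
    and \<phi>: "\<phi> \<in> H Y (sO Q)"
  shows "\<phi> = zr Y (sO Q)"
proof -
  have SO: "sO Q \<in> Ob T" and RO: "R \<in> Ob T" using shift_ob Q rperp_Ob R by auto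
  have "cm e \<phi> = zr Y R" using rperp_zero[OF Y R comp_hom[OF \<phi> iso_hom[OF e SO RO]]] .
  thus ?thesis using iso_cancel_zero_left[OF e SO RO \<phi>] by blast
qed

lemma verdier_of_shift_up_lperp:
  assumes hyp: "U \<inter> N \<subseteq> shift_up T LV"
  shows "verdier_condition T N U X V"
  unfolding verdier_condition_def
proof (intro allI impI, elim conjE)
  fix A B M s g h
  assume tA: "(A,B,M,s,g,h) \<in> Tr" and A: "A \<in> U \<inter> V" and B: "B \<in> U \<inter> V" and MN: "M \<in> N"
  have sH: "s \<in> H A B" and gH: "g \<in> H B M" and hH: "h \<in> H M (sO A)" and BO: "B \<in> Ob T"
    using triangleD tA by auto
  obtain P R r b c where 1: "P \<in> U" "R \<in> RU" "(P, M, R, r, b, c) \<in> Tr"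
    using U_approximation triangleD(6)[OF tA] by blast
  have rH: "r \<in> H P M" using triangleD 1 by auto
  have PN: "P \<in> N" using N_first[OF 1(3) MN rperp_N[OF 1(2)]] .
  then obtain L e where "L \<in> LV" "is_iso T (sO L) P e" using hyp 1(1) unfolding shift_up_def by blast
  hence hr: "cm h r = zr P (sO A)"
    using map_from_lperp_iso_to_shift_V_zero comp_hom[OF rH hH] A by blast
  obtain t where t: "t \<in> H P B" "r = cm g t" using cov_exact_C[OF tA rH hr] by blast
  obtain g' where g': "g' \<in> H B P" "g = cm r g'" using U_lift[OF 1(3) 1(2) _ gH] B by blast
  have tg': "cm t g' \<in> H B B" using comp_hom[OF g'(1) t(1)] .
  have "cm g (cm t g') = g" using comp_assoc[OF g'(1) t(1) gH] t(2)[symmetric] g'(2)[symmetric] by simp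
  hence "cm g (ad (idt B) (ng (cm t g'))) = zr B M" using comp_id_minus_right[OF gH tg'] by simp
  then obtain u where u: "u \<in> H B A" "ad (idt B) (ng (cm t g')) = cm s u"
    using cov_exact_B[OF tA add_hom[OF id_hom[OF BO] neg_hom[OF tg']]] by blast
  have "factors_through T X B B (ng (cm t g'))"
    using factors_through_neg[OF factors_through_comp_right[OF factors_through_X_from_UN[OF 1(1) PN _ t(1)]
        g'(1) X_Ob BO] X_Ob BO BO] B by blast
  hence right: "factors_through T X B B (ad (cm s u) (ng (idt B)))"
    using u(2) sub_sub_self[OF id_hom[OF BO] tg'] by metis
  hence "factors_through T X A B (cm s (ad (cm u s) (ng (idt A))))"
    using factors_through_comp_right[OF right sH X_Ob BO] comp_sub_id_commute[OF sH u(1)] by simp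
  hence "factors_through T X A A (ad (cm u s) (ng (idt A)))"
    using monic_modulo_X[OF tA 1(3) 1(2) hr t] A add_hom comp_hom[OF sH u(1)] neg_hom id_hom
      triangleD(4)[OF tA] by blast
  thus "factor_iso T X A B s" unfolding factor_iso_def using sH u(1) right homD by blast
qed

lemma verdier_of_shift_down_rperp:
  assumes hyp: "V \<inter> N \<subseteq> shift_down T RU"
  shows "verdier_condition T N U X V"
  unfolding verdier_condition_def
proof (intro allI impI, elim conjE)
  fix A B M s g h
  assume tA: "(A,B,M,s,g,h) \<in> Tr" and A: "A \<in> U \<inter> V" and B: "B \<in> U \<inter> V" and MN: "M \<in> N"
  have sH: "s \<in> H A B" and AO: "A \<in> Ob T" and MO: "M \<in> Ob T" using triangleD tA by auto
  obtain M' e where M': "M' \<in> Ob T" "is_iso T (sO M') M e" using shift_ess_surj MO by blast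
  obtain e' where "is_iso T M (sO M') e'" using iso_inverse[OF M'(2) shift_ob[OF M'(1)] MO] by metis
  hence M'N: "M' \<in> N" using N_iso MN triangulated_subcat_shift_iff[OF N M'(1)] by blast
  obtain h' g' where tF: "(M', A, B, h', s, g') \<in> Tr" using rotate_back[OF tA M'] by blast
  have h'H: "h' \<in> H M' A" and g'H: "g' \<in> H B (sO M')" using triangleD tF by auto
  obtain L Q l j k where 1: "L \<in> LV" "Q \<in> V" "(L, M', Q, l, j, k) \<in> Tr"
    using V_approximation M'(1) by blast
  have jH: "j \<in> H M' Q" and QO: "Q \<in> Ob T" using triangleD 1 by auto
  have QN: "Q \<in> N" using N_third[OF 1(3) lperp_N[OF 1(1)] M'N] .
  then obtain R e0 where "R \<in> RU" "is_iso T (sO Q) R e0" using hyp 1(2) unfolding shift_down_def by blast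
  hence sj: "cm (sM j) g' = zr B (sO Q)"
    using map_from_U_to_rperp_iso_zero comp_hom[OF g'H shift_hom[OF jH]] B QO by blast
  obtain t where t: "t \<in> H A Q" "j = cm t h'" using contra_exact_A_unshift[OF tF jH sj] by blast
  obtain h0 where h0: "h0 \<in> H Q A" "h' = cm h0 j" using V_extend[OF 1(3) 1(1) _ h'H] A by blast
  have h0t: "cm h0 t \<in> H A A" using comp_hom[OF t(1) h0(1)] .
  have "cm (cm h0 t) h' = h'" using comp_assoc[OF h'H t(1) h0(1)] t(2)[symmetric] h0(2)[symmetric] by simp
  hence "cm (ad (idt A) (ng (cm h0 t))) h' = zr M' A" using comp_id_minus_left[OF h'H h0t] by simp
  then obtain u where u: "u \<in> H B A" "ad (idt A) (ng (cm h0 t)) = cm u s"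
    using contra_exact_B[OF tF add_hom[OF id_hom[OF AO] neg_hom[OF h0t]]] by blast
  have "factors_through T X A A (ng (cm h0 t))"
    using factors_through_neg[OF factors_through_comp_left[OF factors_through_X_to_VN[OF 1(2) QN _ t(1)]
        h0(1) X_Ob AO] X_Ob AO AO] A by blast
  hence left: "factors_through T X A A (ad (cm u s) (ng (idt A)))"
    using u(2) sub_sub_self[OF id_hom[OF AO] h0t] by metis
  hence "factors_through T X A B (cm (ad (cm s u) (ng (idt B))) s)"
    using factors_through_comp_left[OF left sH X_Ob AO] comp_sub_id_commute[OF sH u(1)] by simp
  hence "factors_through T X B B (ad (cm s u) (ng (idt B)))"
    using epic_modulo_X[OF tF 1(3) 1(1) sj t] B add_hom comp_hom[OF u(1) sH] neg_hom id_hom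
      triangleD(5)[OF tA] by blast
  thus "factor_iso T X A B s" unfolding factor_iso_def using sH u(1) left homD by blast
qed

end

theorem lemma4p3:
  fixes T :: "('o, 'm) tcat" and N U V X :: "'o set"
  assumes tri: "triangulated T"
    and N: "triangulated_subcat T N"
    and U: "additive_subcat T U" and V: "additive_subcat T V"
    and tpU: "torsion_pair T U (rperp T U)"
    and tpV: "torsion_pair T (lperp T V) V"
    and X: "X = U \<inter> V \<inter> N"
    and Xsum: "closed_summands T X"
    and h1: "shift_down T (rperp T U) \<subseteq> V \<inter> N"
    and h2: "shift_up T (lperp T V) \<subseteq> U \<inter> N"
  shows "N_localization_triple T N U X V \<and>
         (shift_up T (lperp T V) = U \<inter> N \<longrightarrow> verdier_condition T N U X V) \<and>
         (shift_down T (rperp T U) = V \<inter> N \<longrightarrow> verdier_condition T N U X V)"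
proof -
  interpret two_torsion_pairs T N U V X
    by (intro two_torsion_pairs.intro triangulated_category.intro two_torsion_pairs_axioms.intro)
      (fact tri N U V tpU tpV X Xsum h1 h2)+
  show ?thesis
    using N_localization_triple verdier_of_shift_up_lperp verdier_of_shift_down_rperp by auto
qed

end
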